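(* In type $A_{n-1}$, every intersection of shards of the Coxeter arrangement equals $C(w)$ for some $w\in S_n$, and for every $w\in S_n$ the cone $C(w)$ is an intersection of shards.
   Context: Shards. Let $V$ be a real Euclidean space with inner product $\langle\cdot,\cdot\rangle$, $\Phi\subset V$ a finite root system with a chosen set of positive roots $\Phi^+$, and $\mathcal A=\{H_\beta:\beta\in\Phi^+\}$ with $H_\beta=\{\lambda\in V:\langle\lambda,\beta\rangle=0\}$ (the Coxeter arrangement). The base region is $B=\{\lambda\in V:\langle\lambda,\beta\rangle>0\text{ for all }\beta\in\Phi^+\}$. For distinct $H,H'\in\mathcal A$ let $\mathcal A(H,H')$ be the set of hyperplanes of $\mathcal A$ containing $H\cap H'$ (a rank two subarrangement). Exactly one connected component $B'$ of $V\setminus\bigcup\mathcal A(H,H')$ contains $B$, and exactly two hyperplanes of $\mathcal A(H,H')$ contain facets of the closure of $B'$; these are the basic hyperplanes of $\mathcal A(H,H')$. Each non-basic $H''\in\mathcal A(H,H')$ is said to be cut by each of the two basic hyperplanes of $\mathcal A(H,H')$. For $H\in\mathcal A$ let $L_H$ be the set of hyperplanes of $\mathcal A$ that cut $H$ in some rank two subarrangement; the shards of $H$ are the closures of the connected components of $H\setminus\bigcup_{H_\gamma\in L_H}(H\cap H_\gamma)$. A shard of $\mathcal A$ is a shard of some $H\in\mathcal A$. An intersection of shards is $\bigcap_{\Sigma\in S}\Sigma$ for a finite set $S$ of shards (the empty intersection is $V$). Type $A_{n-1}$: $V=\{x\in\mathbb R^n:\sum_i x_i=0\}$, $\Phi^+=\{\varepsilon_j-\varepsilon_i:1\le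 i<j\le n\}$, hyperplanes $H_{i,j}=\{x\in V:x_i=x_j\}$, $B=\{x_1<\cdots<x_n\}$. For $w=w(1)\cdots w(n)\in S_n$, the blocks of $w$ are the sets of letters of its maximal decreasing runs (maximal consecutive factors $w(a)>w(a+1)>\cdots>w(b)$). The cone $C(w)\subseteq V$ is the set of $x\in V$ such that: (i) $x_i=x_j$ whenever $i,j$ lie in the same block of $w$; (ii) whenever $i<k<j$ with $i,j$ in the same block and $k$ not in that block, $x_k\le x_i$ if $k$ appears to the left of $i$ in $w$, and $x_i\le x_k$ if $k$ appears to the right of $i$ in $w$. *)

theory Defs
  imports "HOL-Analysis.Analysis" "HOL-Combinatorics.Permutations"
begin

text \<open>Vectors of R^n are functions nat => real supported on {1..n};
  the topology is the product topology on nat => real (which on the finite-dimensional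
  space V coincides with the Euclidean topology).\<close>

definition VA :: "nat \<Rightarrow> (nat \<Rightarrow> real) set" where
  "VA n = {x. (\<forall>i. i \<notin> {1..n} \<longrightarrow> x i = 0) \<and> (\<Sum>i=1..n. x i) = 0}"

definition HA :: "nat \<Rightarrow> nat \<Rightarrow> nat \<Rightarrow> (nat \<Rightarrow> real) set" where
  "HA n i j = {x \<in> VA n. x i = x j}"

definition arrA :: "nat \<Rightarrow> (nat \<Rightarrow> real) set set" where
  "arrA n = {HA n i j | i j. 1 \<le> i \<and> i < j \<and> j \<le> n}"

definition baseA :: "nat \<Rightarrow> (nat \<Rightarrow> real) set" where
  "baseA n = {x \<in> VA n. \<forall>i j. 1 \<le> i \<and> i < j \<and> j \<le> n \<longrightarrow> x i < x j}"

definition subarr :: "nat \<Rightarrow> (nat \<Rightarrow> real) set \<Rightarrow> (nat \<Rightarrow> real) set \<Rightarrow> (nat \<Rightarrow> real) set set" where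
  "subarr n H H' = {K \<in> arrA n. H \<inter> H' \<subseteq> K}"

definition baseComp :: "nat \<Rightarrow> (nat \<Rightarrow> real) set \<Rightarrow> (nat \<Rightarrow> real) set \<Rightarrow> (nat \<Rightarrow> real) set" where
  "baseComp n H H' = (THE C. C \<in> components (VA n - \<Union>(subarr n H H')) \<and> baseA n \<subseteq> C)"

text \<open>A hyperplane K contains a facet of the closed polyhedral cone closure C
  iff K \<inter> closure C has nonempty interior relative to K.\<close>
definition contains_facet :: "(nat \<Rightarrow> real) set \<Rightarrow> (nat \<Rightarrow> real) set \<Rightarrow> bool" where
  "contains_facet K C \<longleftrightarrow> (\<exists>U. open U \<and> U \<inter> K \<noteq> {} \<and> U \<inter> K \<subseteq> closure C)"

definition basic :: "nat \<Rightarrow> (nat \<Rightarrow> real) set \<Rightarrow> (nat \<Rightarrow> real) set \<Rightarrow> (nat \<Rightarrow> real) set \<Rightarrow> bool" where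
  "basic n H H' K \<longleftrightarrow> K \<in> subarr n H H' \<and> contains_facet K (baseComp n H H')"

definition cuts :: "nat \<Rightarrow> (nat \<Rightarrow> real) set \<Rightarrow> (nat \<Rightarrow> real) set \<Rightarrow> bool" where
  "cuts n K H'' \<longleftrightarrow> (\<exists>H \<in> arrA n. \<exists>H' \<in> arrA n. H \<noteq> H' \<and>
      H'' \<in> subarr n H H' \<and> \<not> basic n H H' H'' \<and> basic n H H' K)"

definition cutters :: "nat \<Rightarrow> (nat \<Rightarrow> real) set \<Rightarrow> (nat \<Rightarrow> real) set set" where
  "cutters n H = {K \<in> arrA n. cuts n K H}"

definition shards_of :: "nat \<Rightarrow> (nat \<Rightarrow> real) set \<Rightarrow> (nat \<Rightarrow> real) set set" where
  "shards_of n H = closure ` components (H - (\<Union>K \<in> cutters n H. H \<inter> K))"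

definition shardsA :: "nat \<Rightarrow> (nat \<Rightarrow> real) set set" where
  "shardsA n = (\<Union>H \<in> arrA n. shards_of n H)"

definition shard_intersections :: "nat \<Rightarrow> (nat \<Rightarrow> real) set set" where
  "shard_intersections n = {VA n \<inter> \<Inter>S | S. finite S \<and> S \<subseteq> shardsA n}"

text \<open>Permutations w of {1..n} in one-line notation w(1)...w(n); blocks are the letter
  sets of maximal decreasing runs w(a) > ... > w(b).\<close>
definition blocks :: "nat \<Rightarrow> (nat \<Rightarrow> nat) \<Rightarrow> nat set set" where
  "blocks n w = {w ` {a..b} | a b. 1 \<le> a \<and> a \<le> b \<and> b \<le> n
      \<and> (\<forall>r. a \<le> r \<and> r < b \<longrightarrow> w r > w (Suc r))
      \<and> (a = 1 \<or> w (a - 1) < w a)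
      \<and> (b = n \<or> w b < w (Suc b))}"

definition coneC :: "nat \<Rightarrow> (nat \<Rightarrow> nat) \<Rightarrow> (nat \<Rightarrow> real) set" where
  "coneC n w = {x \<in> VA n.
      (\<forall>Bk \<in> blocks n w. \<forall>i \<in> Bk. \<forall>j \<in> Bk. x i = x j) \<and>
      (\<forall>Bk \<in> blocks n w. \<forall>i \<in> Bk. \<forall>j \<in> Bk. \<forall>k. i < k \<and> k < j \<and> k \<notin> Bk \<longrightarrow>
          (inv w k < inv w i \<longrightarrow> x k \<le> x i) \<and> (inv w i < inv w k \<longrightarrow> x i \<le> x k))}"

end

theory Submission
  imports Defs
begin

(* Encode a finite set R of pairs (a,b), read as inequalities x_a <= x_b, by its cone
   coneR n R in V.
   (1) Geometry.  A rank two subarrangement is either {H_pq, H_qr, H_pr} with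
       p < q < r, whose basic hyperplanes are H_pq and H_qr, or two hyperplanes
       with disjoint index pairs, both basic.  Hence H_ij is cut exactly by the H_ik,
       H_kj with i < k < j, and the shards of H_ij are the closed cones
       shard_cone n i j S = {x_i = x_j, x_k <= x_i for k in S, x_i <= x_k otherwise}.
   (2) Every shard is coneR n (shard_rel i j S), so an intersection of shards is the
       cone of a union R of shard relations (predicate shard_union).
   (3) Combinatorics (locale shard_preorder).  The classes of the preorder R^* can be
       listed greedily -- a minimal class with smallest least element first, each class
       in decreasing order.  Read as a word w, this listing has the classes as its
       maximal decreasing runs (locale run_word), and then coneC n w = coneR n R.
   (4) Conversely coneC n w is the intersection of the shards
       shard_cone n i j {k. k left of i in w} for i < j in a common block. *)

text \<open>Projection of an arbitrary vector onto V by subtracting its mean; it preserves all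
  coordinate differences, and is our source of points of V with prescribed order type.\<close>
definition center :: "nat \<Rightarrow> (nat \<Rightarrow> real) \<Rightarrow> nat \<Rightarrow> real" where
  "center n g = (\<lambda>i. if i \<in> {1..n} then g i - (\<Sum>k=1..n. g k) / real n else 0)"

lemma center_VA: "center n g \<in> VA n"
proof -
  have "(\<Sum>i=1..n. center n g i) = (\<Sum>i=1..n. g i - (\<Sum>k=1..n. g k) / real n)"
    by (rule sum.cong) (auto simp: center_def)
  also have "\<dots> = (\<Sum>i=1..n. g i) - real n * ((\<Sum>k=1..n. g k) / real n)"
    by (simp add: sum_subtractf)
  also have "\<dots> = 0" by (cases "n = 0") auto
  finally show ?thesis by (auto simp: VA_def center_def)
qed

lemma center_diff: "i \<in> {1..n} \<Longrightarrow> j \<in> {1..n} \<Longrightarrow> center n g i - center n g j = g i - g j"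
  by (simp add: center_def)

lemma center_eq: "i \<in> {1..n} \<Longrightarrow> j \<in> {1..n} \<Longrightarrow> center n g i = center n g j \<longleftrightarrow> g i = g j"
  using center_diff[of i n j g] by linarith

lemma center_less: "i \<in> {1..n} \<Longrightarrow> j \<in> {1..n} \<Longrightarrow> center n g i < center n g j \<longleftrightarrow> g i < g j"
  using center_diff[of i n j g] by linarith

lemma VA_comb: assumes "x \<in> VA n" "y \<in> VA n" shows "(\<lambda>i. a * x i + b * y i) \<in> VA n"
proof -
  have "(\<Sum>i=1..n. a * x i + b * y i) = a * (\<Sum>i=1..n. x i) + b * (\<Sum>i=1..n. y i)"
    by (simp add: sum.distrib sum_distrib_left)
  then show ?thesis using assms by (auto simp: VA_def)
qed

lemma VA_lin: "x \<in> VA n \<Longrightarrow> y \<in> VA n \<Longrightarrow> (\<lambda>i. x i + t * y i) \<in> VA n"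
  using VA_comb[of x n y 1 t] by simp

lemma continuous_on_coordinate[continuous_intros]: "continuous_on S (\<lambda>x::nat\<Rightarrow>real. x i)"
  by (rule continuous_on_subset[OF continuous_on_product_coordinates]) auto

lemma closed_VA: "closed (VA n)"
proof -
  have "VA n = (\<Inter>i\<in>-{1..n}. {x. x i = 0}) \<inter> {x. (\<Sum>i=1..n. x i) = 0}"
    by (auto simp: VA_def)
  moreover have "closed {x::nat\<Rightarrow>real. (\<Sum>i=1..n. x i) = 0}"
    by (intro closed_Collect_eq continuous_intros)
  moreover have "closed {x::nat\<Rightarrow>real. x i = 0}" for i
    by (intro closed_Collect_eq continuous_intros)
  ultimately show ?thesis by (metis closed_INT closed_Int)
qed

lemma closed_coord_le: "closed {x::nat\<Rightarrow>real. x k \<le> x l}"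
  by (intro closed_Collect_le continuous_intros)

lemma closed_coord_eq: "closed {x::nat\<Rightarrow>real. x k = x l}"
  by (intro closed_Collect_eq continuous_intros)

lemma open_coord_less: "open {x::nat\<Rightarrow>real. x k < x l}"
  by (intro open_Collect_less continuous_intros)

lemma closure_by_path:
  fixes \<gamma> :: "real \<Rightarrow> nat \<Rightarrow> real"
  assumes "continuous_on UNIV \<gamma>" "\<And>t. t > 0 \<Longrightarrow> \<gamma> t \<in> A"
  shows "\<gamma> 0 \<in> closure A"
proof -
  have "\<gamma> ` closure {0<..} \<subseteq> closure A"
    by (rule image_closure_subset)
      (use assms in \<open>auto intro: continuous_on_subset closure_subset[THEN subsetD]\<close>)
  then show ?thesis by auto
qed

lemma connected_constant_sign:
  fixes f :: "'a::topological_space \<Rightarrow> real"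
  assumes "connected D" "continuous_on D f" "\<forall>x\<in>D. f x \<noteq> 0" "a \<in> D" "f a > 0" "b \<in> D"
  shows "f b > 0"
proof (rule ccontr)
  assume "\<not> f b > 0"
  then have fb: "f b < 0" using assms by force
  have "connected (f ` D)" by (rule connected_continuous_image) (use assms in auto)
  then have "{f b..f a} \<subseteq> f ` D" using connected_contains_Icc assms by blast
  then have "0 \<in> f ` D" using fb \<open>f a > 0\<close> by auto
  then show False using assms by auto
qed

lemma connected_by_segments:
  assumes "\<And>x y t. x \<in> C \<Longrightarrow> y \<in> C \<Longrightarrow> 0 \<le> t \<Longrightarrow> t \<le> 1 \<Longrightarrow> (\<lambda>i. (1 - t) * x i + t * y i) \<in> C"
  shows "connected (C :: (nat \<Rightarrow> real) set)"
proof (rule path_connected_imp_connected)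
  show "path_connected C"
    unfolding path_connected_def
  proof (intro ballI)
    fix x y assume xy: "x \<in> C" "y \<in> C"
    let ?g = "\<lambda>t::real. (\<lambda>i. (1 - t) * x i + t * y i)"
    have "path ?g" unfolding path_def by (intro continuous_intros)
    moreover have "path_image ?g \<subseteq> C" unfolding path_image_def using assms xy by auto
    moreover have "pathstart ?g = x" "pathfinish ?g = y" by (auto simp: pathstart_def pathfinish_def)
    ultimately show "\<exists>g. path g \<and> path_image g \<subseteq> C \<and> pathstart g = x \<and> pathfinish g = y" by blast
  qed
qed

lemma convex_comb_pos: "(a::real) > 0 \<Longrightarrow> b > 0 \<Longrightarrow> 0 \<le> t \<Longrightarrow> t \<le> 1 \<Longrightarrow> (1 - t) * a + t * b > 0"
  by (cases "t = 0") (auto intro: add_nonneg_pos)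

lemma cell_component:
  fixes T C :: "(nat\<Rightarrow>real) set" and f :: "'i \<Rightarrow> (nat\<Rightarrow>real) \<Rightarrow> real"
  assumes "C \<noteq> {}" "connected C" "C = {x\<in>T. \<forall>m\<in>M. f m x > 0}"
    "\<forall>m\<in>M. continuous_on UNIV (f m)" "\<forall>m\<in>M. \<forall>x\<in>T. f m x \<noteq> 0"
  shows "C \<in> components T"
  unfolding in_components_maximal
proof (intro conjI allI impI)
  show "C \<noteq> {}" "connected C" "C \<subseteq> T" using assms by auto
  fix D assume D: "D \<noteq> {} \<and> C \<subseteq> D \<and> D \<subseteq> T \<and> connected D"
  obtain c where c: "c \<in> C" using assms by auto
  have "D \<subseteq> C"
  proof
    fix x assume x: "x \<in> D"
    have "f m x > 0" if m: "m \<in> M" for m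
      by (rule connected_constant_sign[of D "f m" c])
        (use D m assms c x in \<open>auto intro: continuous_on_subset\<close>)
    then show "x \<in> C" using D x assms(3) by auto
  qed
  then show "D = C" using D by auto
qed

section \<open>Rank two subarrangements and the cutting relation\<close>

definition region :: "nat \<Rightarrow> (nat \<times> nat) set \<Rightarrow> (nat \<Rightarrow> real) set" where
  "region n Ps = {x\<in>VA n. \<forall>(k,l)\<in>Ps. x k < x l}"

abbreviation increasing_pairs :: "nat \<Rightarrow> (nat \<times> nat) set \<Rightarrow> bool" where
  "increasing_pairs n Ps \<equiv> Ps \<subseteq> {(k,l). 1 \<le> k \<and> k < l \<and> l \<le> n}"

text \<open>The point (1,2,...,n) recentred; it lies in the base region and serves as a
  direction pushing points into the interior of regions containing B.\<close>
definition staircase :: "nat \<Rightarrow> nat \<Rightarrow> real" where "staircase n = center n real"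

lemma staircase_diff: "k \<in> {1..n} \<Longrightarrow> l \<in> {1..n} \<Longrightarrow> staircase n l - staircase n k = real l - real k"
  unfolding staircase_def by (rule center_diff)

lemma staircase_base: "staircase n \<in> baseA n"
  using staircase_diff[of _ n] by (auto simp: baseA_def staircase_def center_VA center_less)

lemma base_subset_region: "increasing_pairs n Ps \<Longrightarrow> baseA n \<subseteq> region n Ps"
  by (auto simp: baseA_def region_def)

lemma region_component:
  assumes "increasing_pairs n Ps"
  shows "region n Ps \<in> components {x\<in>VA n. \<forall>(k,l)\<in>Ps. x k \<noteq> x l}"
proof (rule cell_component[where M = Ps and f = "\<lambda>(k,l) x. x l - x k"])
  show "region n Ps \<noteq> {}" using staircase_base base_subset_region[OF assms] by blast
  show "connected (region n Ps)"
  proof (rule connected_by_segments)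
    fix x y and t :: real assume h: "x \<in> region n Ps" "y \<in> region n Ps" "0 \<le> t" "t \<le> 1"
    have "(1 - t) * x k + t * y k < (1 - t) * x l + t * y l" if "(k,l) \<in> Ps" for k l
    proof -
      have "x l - x k > 0" "y l - y k > 0" using h that by (auto simp: region_def)
      from convex_comb_pos[OF this h(3,4)] show ?thesis by (simp add: algebra_simps)
    qed
    then show "(\<lambda>i. (1 - t) * x i + t * y i) \<in> region n Ps"
      using h VA_comb[of x n y "1-t" t] by (auto simp: region_def)
  qed
qed (auto simp: region_def intro!: continuous_intros)

lemma baseComp_eq_region:
  assumes "subarr n H H' = (\<lambda>(k,l). HA n k l) ` Ps" "increasing_pairs n Ps"
  shows "baseComp n H H' = region n Ps"
proof -
  have complement: "VA n - \<Union>(subarr n H H') = {x\<in>VA n. \<forall>(k,l)\<in>Ps. x k \<noteq> x l}"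
    unfolding assms(1) by (auto simp: HA_def)
  show ?thesis unfolding baseComp_def complement
  proof (rule the_equality)
    show "region n Ps \<in> components {x\<in>VA n. \<forall>(k,l)\<in>Ps. x k \<noteq> x l} \<and> baseA n \<subseteq> region n Ps"
      using region_component[OF assms(2)] base_subset_region[OF assms(2)] by auto
    fix C assume C: "C \<in> components {x\<in>VA n. \<forall>(k,l)\<in>Ps. x k \<noteq> x l} \<and> baseA n \<subseteq> C"
    have "C \<inter> region n Ps \<noteq> {}" using C base_subset_region[OF assms(2)] staircase_base by blast
    then show "C = region n Ps" using components_nonoverlap C region_component[OF assms(2)] by blast
  qed
qed

lemma closure_region:
  assumes "increasing_pairs n Ps"
  shows "closure (region n Ps) = {x\<in>VA n. \<forall>(k,l)\<in>Ps. x k \<le> x l}"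
proof
  have "{x\<in>VA n. \<forall>(k,l)\<in>Ps. x k \<le> x l} = VA n \<inter> (\<Inter>p\<in>Ps. {x. x (fst p) \<le> x (snd p)})"
    by fastforce
  moreover have "closed \<dots>" using closed_VA closed_coord_le by (intro closed_Int closed_INT) auto
  ultimately show "closure (region n Ps) \<subseteq> {x\<in>VA n. \<forall>(k,l)\<in>Ps. x k \<le> x l}"
    by (intro closure_minimal) (auto simp: region_def)
next
  show "{x\<in>VA n. \<forall>(k,l)\<in>Ps. x k \<le> x l} \<subseteq> closure (region n Ps)"
  proof
    fix y assume y: "y \<in> {x\<in>VA n. \<forall>(k,l)\<in>Ps. x k \<le> x l}"
    let ?g = "\<lambda>t::real. (\<lambda>i. y i + t * staircase n i)"
    have "?g 0 \<in> closure (region n Ps)"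
    proof (rule closure_by_path)
      show "continuous_on UNIV ?g" by (intro continuous_intros)
      fix t :: real assume t: "t > 0"
      have "y k + t * staircase n k < y l + t * staircase n l" if kl: "(k,l) \<in> Ps" for k l
      proof -
        have "staircase n l - staircase n k = real l - real k" "k < l" "y k \<le> y l"
          using assms y kl by (auto intro!: staircase_diff)
        then have "t * (staircase n l - staircase n k) > 0" using t by simp
        then show ?thesis using \<open>y k \<le> y l\<close> by (simp add: algebra_simps)
      qed
      then show "?g t \<in> region n Ps" using y VA_lin[of y n "staircase n" t]
        by (auto simp: region_def staircase_def center_VA)
    qed
    then show "y \<in> closure (region n Ps)" by simp
  qed
qed

definition indicator_point :: "nat \<Rightarrow> nat set \<Rightarrow> nat \<Rightarrow> real" where
  "indicator_point n S = center n (\<lambda>i. if i \<in> S then 1 else 0)"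

lemma indicator_point_VA: "indicator_point n S \<in> VA n"
  by (simp add: indicator_point_def center_VA)

lemma indicator_point_eq:
  "k \<in> {1..n} \<Longrightarrow> l \<in> {1..n} \<Longrightarrow> indicator_point n S k = indicator_point n S l \<longleftrightarrow> (k \<in> S \<longleftrightarrow> l \<in> S)"
  unfolding indicator_point_def by (subst center_eq) auto

lemma indicator_point_less:
  "k \<in> {1..n} \<Longrightarrow> l \<in> {1..n} \<Longrightarrow> indicator_point n S k < indicator_point n S l \<longleftrightarrow> (k \<notin> S \<and> l \<in> S)"
  unfolding indicator_point_def by (subst center_less) auto

lemma indicator_point_test:
  "E \<subseteq> HA n k l \<Longrightarrow> indicator_point n S \<in> E \<Longrightarrow> k \<in> {1..n} \<Longrightarrow> l \<in> {1..n} \<Longrightarrow> (k \<in> S \<longleftrightarrow> l \<in> S)"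
  using indicator_point_eq[of k n l S] by (auto simp: HA_def)

lemma HA_arr: "1 \<le> k \<Longrightarrow> k < l \<Longrightarrow> l \<le> n \<Longrightarrow> HA n k l \<in> arrA n"
  by (auto simp: arrA_def)

lemma HA_subset_imp_eq:
  assumes "1 \<le> a" "a < b" "b \<le> n" "1 \<le> c" "c < d" "d \<le> n" "HA n a b \<subseteq> HA n c d"
  shows "a = c \<and> b = d"
proof (rule ccontr)
  assume ne: "\<not> (a = c \<and> b = d)"
  have "\<exists>S. indicator_point n S \<in> HA n a b \<and> indicator_point n S \<notin> HA n c d"
  proof (cases "c \<in> {a,b}")
    case False then show ?thesis using assms
      by (intro exI[of _ "{c}"]) (auto simp: HA_def indicator_point_VA indicator_point_eq)
  next
    case True
    then have "d \<notin> {a,b}" using ne assms by auto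
    then show ?thesis using assms
      by (intro exI[of _ "{d}"]) (auto simp: HA_def indicator_point_VA indicator_point_eq)
  qed
  then show False using assms by auto
qed

lemma HA_eq_iff:
  "1 \<le> a \<Longrightarrow> a < b \<Longrightarrow> b \<le> n \<Longrightarrow> 1 \<le> c \<Longrightarrow> c < d \<Longrightarrow> d \<le> n \<Longrightarrow>
    HA n a b = HA n c d \<longleftrightarrow> a = c \<and> b = d"
  using HA_subset_imp_eq[of a b n c d] by auto

lemma contains_facetI:
  assumes "y \<in> K" "y c < y d" "{x\<in>K. x c < x d} \<subseteq> closure C"
  shows "contains_facet K C"
  unfolding contains_facet_def
  by (rule exI[of _ "{x. x c < x d}"]) (use assms open_coord_less in auto)

text \<open>In the arrangement {H_pq, H_qr, H_pr}, the middle hyperplane H_pr does not meet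
  the closure of the base component in a facet: moving off the line x_p = x_q = x_r
  in direction e_q leaves the closure.\<close>
lemma middle_not_facet:
  assumes "1 \<le> p" "p < q" "q < r" "r \<le> n"
  shows "\<not> contains_facet (HA n p r) (region n {(p,q),(q,r),(p,r)})"
proof
  let ?e = "indicator_point n {q}"
  have cl: "closure (region n {(p,q),(q,r),(p,r)}) = {x\<in>VA n. x p \<le> x q \<and> x q \<le> x r \<and> x p \<le> x r}"
    using assms by (subst closure_region) auto
  assume "contains_facet (HA n p r) (region n {(p,q),(q,r),(p,r)})"
  then obtain U y where U: "open U" "U \<inter> HA n p r \<subseteq> closure (region n {(p,q),(q,r),(p,r)})"
    and y: "y \<in> U" "y \<in> HA n p r"
    unfolding contains_facet_def by blast
  let ?g = "\<lambda>t::real. (\<lambda>i. y i + t * ?e i)"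
  have "open (?g -` U)" by (rule open_vimage) (use U in \<open>auto intro!: continuous_intros\<close>)
  moreover have "0 \<in> ?g -` U" using y by simp
  ultimately obtain \<epsilon> where \<epsilon>: "\<epsilon> > 0" "ball 0 \<epsilon> \<subseteq> ?g -` U" by (metis open_contains_ball)
  have "\<epsilon>/2 \<in> ball 0 \<epsilon>" using \<epsilon> by simp
  then have "\<epsilon>/2 \<in> ?g -` U" using \<epsilon>(2) by blast
  then have gU: "?g (\<epsilon>/2) \<in> U" by (rule vimageD)
  have e_pr: "?e p = ?e r" using assms by (subst indicator_point_eq) auto
  have e_q: "?e q - ?e p = 1" using assms unfolding indicator_point_def by (subst center_diff) auto
  have "?g (\<epsilon>/2) \<in> HA n p r"
    using y VA_lin[of y n ?e "\<epsilon>/2"] indicator_point_VA e_pr by (auto simp: HA_def)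
  then have "?g (\<epsilon>/2) \<in> closure (region n {(p,q),(q,r),(p,r)})" using gU U by auto
  then have "y q + \<epsilon>/2 * ?e q \<le> y r + \<epsilon>/2 * ?e r" using cl by auto
  moreover have "y \<in> closure (region n {(p,q),(q,r),(p,r)})" using y U by auto
  then have "y p = y q" "y p = y r" using y cl by (auto simp: HA_def)
  moreover have "\<epsilon>/2 * (?e q - ?e p) > 0" using e_q \<epsilon> by simp
  ultimately show False using e_pr by (simp add: algebra_simps)
qed

lemma triple_subarr:
  assumes "1 \<le> p" "p < q" "q < r" "r \<le> n"
    "H \<in> {HA n p q, HA n q r, HA n p r}" "H' \<in> {HA n p q, HA n q r, HA n p r}" "H \<noteq> H'"
  shows "subarr n H H' = {HA n p q, HA n q r, HA n p r}"
    and "basic n H H' K \<longleftrightarrow> K = HA n p q \<or> K = HA n q r"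
proof -
  have int: "H \<inter> H' = {x\<in>VA n. x p = x q \<and> x q = x r}"
    using assms(5,6,7) by (auto simp: HA_def)
  show sub: "subarr n H H' = {HA n p q, HA n q r, HA n p r}"
  proof
    show "{HA n p q, HA n q r, HA n p r} \<subseteq> subarr n H H'"
      using assms(1-4) by (auto simp: subarr_def int HA_arr) (auto simp: HA_def)
    show "subarr n H H' \<subseteq> {HA n p q, HA n q r, HA n p r}"
    proof
      fix K assume "K \<in> subarr n H H'"
      then obtain k l where kl: "K = HA n k l" "1 \<le> k" "k < l" "l \<le> n" "H \<inter> H' \<subseteq> HA n k l"
        by (auto simp: subarr_def arrA_def)
      have sep: "k \<in> S \<longleftrightarrow> l \<in> S" if "(p \<in> S \<longleftrightarrow> q \<in> S) \<and> (q \<in> S \<longleftrightarrow> r \<in> S)" for S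
        by (rule indicator_point_test[OF kl(5)])
          (use that assms(1-4) kl in \<open>auto simp: int indicator_point_VA indicator_point_eq\<close>)
      have "k \<in> {p,q,r}" "l \<in> {p,q,r}" using sep[of "{k}"] sep[of "{l}"] kl(3) by auto
      then show "K \<in> {HA n p q, HA n q r, HA n p r}" using kl assms(2,3) by auto
    qed
  qed
  have bc: "baseComp n H H' = region n {(p,q),(q,r),(p,r)}"
    by (rule baseComp_eq_region) (use sub assms(1-4) in auto)
  have cl: "closure (region n {(p,q),(q,r),(p,r)}) = {x\<in>VA n. x p \<le> x q \<and> x q \<le> x r \<and> x p \<le> x r}"
    using assms by (subst closure_region) auto
  have "contains_facet (HA n p q) (region n {(p,q),(q,r),(p,r)})"
  proof (rule contains_facetI)
    show "indicator_point n {r} \<in> HA n p q"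
      using assms(1-4) by (auto simp: HA_def indicator_point_VA indicator_point_eq)
    show "indicator_point n {r} q < indicator_point n {r} r"
      using assms(1-4) by (auto simp: indicator_point_less)
  qed (auto simp: cl HA_def)
  moreover have "contains_facet (HA n q r) (region n {(p,q),(q,r),(p,r)})"
  proof (rule contains_facetI)
    show "indicator_point n {q,r} \<in> HA n q r"
      using assms(1-4) by (auto simp: HA_def indicator_point_VA indicator_point_eq)
    show "indicator_point n {q,r} p < indicator_point n {q,r} q"
      using assms(1-4) by (auto simp: indicator_point_less)
  qed (auto simp: cl HA_def)
  moreover have "\<not> contains_facet (HA n p r) (region n {(p,q),(q,r),(p,r)})"
    by (rule middle_not_facet) (use assms in auto)
  ultimately show "basic n H H' K \<longleftrightarrow> K = HA n p q \<or> K = HA n q r"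
    unfolding basic_def sub bc by auto
qed

lemma disjoint_subarr:
  assumes "1 \<le> a" "a < b" "b \<le> n" "1 \<le> c" "c < d" "d \<le> n" "a \<noteq> c" "a \<noteq> d" "b \<noteq> c" "b \<noteq> d"
  shows "subarr n (HA n a b) (HA n c d) = {HA n a b, HA n c d}"
    and "basic n (HA n a b) (HA n c d) K \<longleftrightarrow> K = HA n a b \<or> K = HA n c d"
proof -
  have int: "HA n a b \<inter> HA n c d = {x\<in>VA n. x a = x b \<and> x c = x d}"
    by (auto simp: HA_def)
  show sub: "subarr n (HA n a b) (HA n c d) = {HA n a b, HA n c d}"
  proof
    show "{HA n a b, HA n c d} \<subseteq> subarr n (HA n a b) (HA n c d)"
      using assms(1-6) by (auto simp: subarr_def HA_arr)
    show "subarr n (HA n a b) (HA n c d) \<subseteq> {HA n a b, HA n c d}"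
    proof
      fix K assume "K \<in> subarr n (HA n a b) (HA n c d)"
      then obtain k l where kl: "K = HA n k l" "1 \<le> k" "k < l" "l \<le> n"
          "HA n a b \<inter> HA n c d \<subseteq> HA n k l"
        by (auto simp: subarr_def arrA_def)
      have sep: "k \<in> S \<longleftrightarrow> l \<in> S" if "(a \<in> S \<longleftrightarrow> b \<in> S) \<and> (c \<in> S \<longleftrightarrow> d \<in> S)" for S
        by (rule indicator_point_test[OF kl(5)])
          (use that assms(1-6) kl in \<open>auto simp: int indicator_point_VA indicator_point_eq\<close>)
      have "k \<in> {a,b,c,d}" "l \<in> {a,b,c,d}" using sep[of "{k}"] sep[of "{l}"] kl(3) by auto
      moreover have "k \<in> {a,b} \<longleftrightarrow> l \<in> {a,b}" using sep[of "{a,b}"] assms by auto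
      ultimately show "K \<in> {HA n a b, HA n c d}" using kl assms by auto
    qed
  qed
  have bc: "baseComp n (HA n a b) (HA n c d) = region n {(a,b),(c,d)}"
    by (rule baseComp_eq_region) (use sub assms(1-6) in auto)
  have cl: "closure (region n {(a,b),(c,d)}) = {x\<in>VA n. x a \<le> x b \<and> x c \<le> x d}"
    using assms by (subst closure_region) auto
  have "contains_facet (HA n a b) (region n {(a,b),(c,d)})"
  proof (rule contains_facetI)
    show "indicator_point n {d} \<in> HA n a b"
      using assms by (auto simp: HA_def indicator_point_VA indicator_point_eq)
    show "indicator_point n {d} c < indicator_point n {d} d"
      using assms by (auto simp: indicator_point_less)
  qed (auto simp: cl HA_def)
  moreover have "contains_facet (HA n c d) (region n {(a,b),(c,d)})"
  proof (rule contains_facetI)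
    show "indicator_point n {b} \<in> HA n c d"
      using assms by (auto simp: HA_def indicator_point_VA indicator_point_eq)
    show "indicator_point n {b} a < indicator_point n {b} b"
      using assms by (auto simp: indicator_point_less)
  qed (auto simp: cl HA_def)
  ultimately show "basic n (HA n a b) (HA n c d) K \<longleftrightarrow> K = HA n a b \<or> K = HA n c d"
    unfolding basic_def sub bc by auto
qed

lemma rank_two_cases:
  assumes "H \<in> arrA n" "H' \<in> arrA n" "H \<noteq> H'"
  obtains p q r where "1 \<le> p" "p < q" "q < r" "r \<le> n"
      "H \<in> {HA n p q, HA n q r, HA n p r}" "H' \<in> {HA n p q, HA n q r, HA n p r}"
    | a b c d where "1 \<le> a" "a < b" "b \<le> n" "1 \<le> c" "c < d" "d \<le> n"
      "a \<noteq> c" "a \<noteq> d" "b \<noteq> c" "b \<noteq> d" "H = HA n a b" "H' = HA n c d"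
proof -
  obtain a b c d where H: "H = HA n a b" "1 \<le> a" "a < b" "b \<le> n"
    and H': "H' = HA n c d" "1 \<le> c" "c < d" "d \<le> n"
    using assms(1,2) by (auto simp: arrA_def)
  have "(a,b) \<noteq> (c,d)" using assms(3) H H' by auto
  consider "a = c" | "b = d" | "a = d" | "b = c" | "a \<noteq> c" "a \<noteq> d" "b \<noteq> c" "b \<noteq> d" by blast
  then show thesis
  proof cases
    case 1
    with \<open>(a,b) \<noteq> (c,d)\<close> consider "b < d" | "d < b" by fastforce
    then show thesis using H H' 1 that(1)[of a b d] that(1)[of a d b] by cases auto
  next
    case 2
    with \<open>(a,b) \<noteq> (c,d)\<close> consider "a < c" | "c < a" by fastforce
    then show thesis using H H' 2 that(1)[of a c b] that(1)[of c a b] by cases auto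
  next
    case 3 then show thesis using H H' that(1)[of c a b] by auto
  next
    case 4 then show thesis using H H' that(1)[of a b d] by auto
  next
    case 5 then show thesis using H H' that(2) by blast
  qed
qed

lemma cuts_iff:
  assumes "1 \<le> i" "i < j" "j \<le> n"
  shows "cuts n K (HA n i j) \<longleftrightarrow> (\<exists>k. i < k \<and> k < j \<and> (K = HA n i k \<or> K = HA n k j))"
proof
  assume "cuts n K (HA n i j)"
  then obtain H H' where HH: "H \<in> arrA n" "H' \<in> arrA n" "H \<noteq> H'" "HA n i j \<in> subarr n H H'"
    "\<not> basic n H H' (HA n i j)" "basic n H H' K"
    unfolding cuts_def by blast
  from HH(1-3) show "\<exists>k. i < k \<and> k < j \<and> (K = HA n i k \<or> K = HA n k j)"
  proof (cases rule: rank_two_cases)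
    case (1 p q r)
    note tr = triple_subarr[OF 1 HH(3)]
    have "HA n i j \<in> {HA n p q, HA n q r, HA n p r}" "HA n i j \<noteq> HA n p q" "HA n i j \<noteq> HA n q r"
      using HH(4,5) tr by auto
    then have "HA n i j = HA n p r" by blast
    then have "i = p" "j = r" using HA_eq_iff[of i j n p r] 1 assms by auto
    moreover have "K = HA n p q \<or> K = HA n q r" using HH(6) tr(2)[of K] by simp
    ultimately show ?thesis using 1 by blast
  next
    case (2 a b c d)
    note dj = disjoint_subarr[OF 2(1-10)]
    show ?thesis using HH(4,5) dj 2(11,12) by auto
  qed
next
  assume "\<exists>k. i < k \<and> k < j \<and> (K = HA n i k \<or> K = HA n k j)"
  then obtain k where k: "i < k" "k < j" "K = HA n i k \<or> K = HA n k j" by blast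
  have ne: "HA n i k \<noteq> HA n k j" using HA_eq_iff[of i k n k j] k assms by auto
  note tr = triple_subarr[of i k j n "HA n i k" "HA n k j", OF assms(1) k(1,2) assms(3) _ _ ne]
  have "HA n i j \<noteq> HA n i k" "HA n i j \<noteq> HA n k j"
    using HA_eq_iff[of i j n i k] HA_eq_iff[of i j n k j] k assms by auto
  then have "HA n i j \<in> subarr n (HA n i k) (HA n k j)" "\<not> basic n (HA n i k) (HA n k j) (HA n i j)"
    using tr by auto
  moreover have "basic n (HA n i k) (HA n k j) K" using tr(2)[of K] k(3) by simp
  moreover have "HA n i k \<in> arrA n" "HA n k j \<in> arrA n" using k assms by (auto intro: HA_arr)
  ultimately show "cuts n K (HA n i j)" unfolding cuts_def using ne by blast
qed

section \<open>The shards of H_ij\<close>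

definition uncut_part :: "nat \<Rightarrow> nat \<Rightarrow> nat \<Rightarrow> (nat\<Rightarrow>real) set" where
  "uncut_part n i j = {x\<in>HA n i j. \<forall>k. i < k \<and> k < j \<longrightarrow> x k \<noteq> x i}"

lemma uncut_part_eq:
  assumes "1 \<le> i" "i < j" "j \<le> n"
  shows "HA n i j - (\<Union>K \<in> cutters n (HA n i j). HA n i j \<inter> K) = uncut_part n i j"
proof -
  have cutters: "cutters n (HA n i j) = {K. \<exists>k. i < k \<and> k < j \<and> (K = HA n i k \<or> K = HA n k j)}"
    unfolding cutters_def cuts_iff[OF assms] using assms by (auto intro: HA_arr)
  have "(\<Union>K \<in> cutters n (HA n i j). HA n i j \<inter> K) = {x\<in>HA n i j. \<exists>k. i < k \<and> k < j \<and> x k = x i}"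
  proof (rule set_eqI, rule iffI)
    fix x assume "x \<in> (\<Union>K \<in> cutters n (HA n i j). HA n i j \<inter> K)"
    then show "x \<in> {x\<in>HA n i j. \<exists>k. i < k \<and> k < j \<and> x k = x i}"
      unfolding cutters by (auto simp: HA_def)
  next
    fix x assume "x \<in> {x\<in>HA n i j. \<exists>k. i < k \<and> k < j \<and> x k = x i}"
    then obtain k where k: "x \<in> HA n i j" "i < k" "k < j" "x k = x i" by blast
    then have "HA n i k \<in> cutters n (HA n i j)" "x \<in> HA n i j \<inter> HA n i k"
      unfolding cutters by (auto simp: HA_def)
    then show "x \<in> (\<Union>K \<in> cutters n (HA n i j). HA n i j \<inter> K)" by blast
  qed
  then show ?thesis unfolding uncut_part_def by auto
qed

definition shard_cell :: "nat \<Rightarrow> nat \<Rightarrow> nat \<Rightarrow> nat set \<Rightarrow> (nat\<Rightarrow>real) set" where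
  "shard_cell n i j S = {x\<in>HA n i j. \<forall>k. i < k \<and> k < j \<longrightarrow> (k \<in> S \<longrightarrow> x k < x i) \<and> (k \<notin> S \<longrightarrow> x i < x k)}"

definition shard_cone :: "nat \<Rightarrow> nat \<Rightarrow> nat \<Rightarrow> nat set \<Rightarrow> (nat\<Rightarrow>real) set" where
  "shard_cone n i j S = {x\<in>VA n. x i = x j \<and>
     (\<forall>k. i < k \<and> k < j \<longrightarrow> (k \<in> S \<longrightarrow> x k \<le> x i) \<and> (k \<notin> S \<longrightarrow> x i \<le> x k))}"

text \<open>Direction pushing a point of the shard cone into the shard cell.\<close>
definition shard_direction :: "nat \<Rightarrow> nat \<Rightarrow> nat \<Rightarrow> nat set \<Rightarrow> nat \<Rightarrow> real" where
  "shard_direction n i j S = center n (\<lambda>k. if i < k \<and> k < j then (if k \<in> S then -1 else 1) else 0)"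

lemma shard_direction_in_cell:
  assumes "1 \<le> i" "i < j" "j \<le> n"
  shows "shard_direction n i j S \<in> shard_cell n i j S"
  using assms by (auto simp: shard_direction_def shard_cell_def HA_def center_VA center_eq center_less)

lemma shard_cell_component:
  assumes "1 \<le> i" "i < j" "j \<le> n"
  shows "shard_cell n i j S \<in> components (uncut_part n i j)"
proof (rule cell_component[where M = "{i<..<j}" and f = "\<lambda>k x. if k \<in> S then x i - x k else x k - x i"])
  show "shard_cell n i j S \<noteq> {}" using shard_direction_in_cell[OF assms] by blast
  show "connected (shard_cell n i j S)"
  proof (rule connected_by_segments)
    fix x y and t :: real assume h: "x \<in> shard_cell n i j S" "y \<in> shard_cell n i j S" "0 \<le> t" "t \<le> 1"
    let ?z = "\<lambda>m. (1 - t) * x m + t * y m"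
    have "(k \<in> S \<longrightarrow> ?z k < ?z i) \<and> (k \<notin> S \<longrightarrow> ?z i < ?z k)" if k: "i < k" "k < j" for k
    proof (cases "k \<in> S")
      case True
      then have "x i - x k > 0" "y i - y k > 0" using h k by (auto simp: shard_cell_def)
      from convex_comb_pos[OF this h(3,4)] True show ?thesis by (simp add: algebra_simps)
    next
      case False
      then have "x k - x i > 0" "y k - y i > 0" using h k by (auto simp: shard_cell_def)
      from convex_comb_pos[OF this h(3,4)] False show ?thesis by (simp add: algebra_simps)
    qed
    then show "?z \<in> shard_cell n i j S"
      using h VA_comb[of x n y "1-t" t] by (auto simp: shard_cell_def HA_def)
  qed
  show "\<forall>m\<in>{i<..<j}. continuous_on UNIV (\<lambda>x::nat\<Rightarrow>real. if m \<in> S then x i - x m else x m - x i)"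
  proof
    fix m show "continuous_on UNIV (\<lambda>x::nat\<Rightarrow>real. if m \<in> S then x i - x m else x m - x i)"
      by (cases "m \<in> S") (auto intro!: continuous_intros)
  qed
qed (auto simp: shard_cell_def uncut_part_def)

lemma closure_shard_cell:
  assumes "1 \<le> i" "i < j" "j \<le> n"
  shows "closure (shard_cell n i j S) = shard_cone n i j S"
proof
  have "shard_cone n i j S = VA n \<inter> {x. x i = x j} \<inter> (\<Inter>k\<in>{i<..<j}\<inter>S. {x. x k \<le> x i})
      \<inter> (\<Inter>k\<in>{i<..<j}-S. {x. x i \<le> x k})"
    by (auto simp: shard_cone_def)
  moreover have "closed \<dots>" using closed_VA closed_coord_le closed_coord_eq
    by (intro closed_Int closed_INT) auto
  ultimately show "closure (shard_cell n i j S) \<subseteq> shard_cone n i j S"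
    by (intro closure_minimal) (auto simp: shard_cell_def shard_cone_def HA_def)
next
  show "shard_cone n i j S \<subseteq> closure (shard_cell n i j S)"
  proof
    fix y assume y: "y \<in> shard_cone n i j S"
    let ?d = "shard_direction n i j S"
    let ?g = "\<lambda>t::real. (\<lambda>m. y m + t * ?d m)"
    have d: "?d \<in> shard_cell n i j S" by (rule shard_direction_in_cell[OF assms])
    have "?g 0 \<in> closure (shard_cell n i j S)"
    proof (rule closure_by_path)
      show "continuous_on UNIV ?g" by (intro continuous_intros)
      fix t :: real assume t: "t > 0"
      have "(k \<in> S \<longrightarrow> ?g t k < ?g t i) \<and> (k \<notin> S \<longrightarrow> ?g t i < ?g t k)" if k: "i < k" "k < j" for k
      proof -
        have "(k \<in> S \<longrightarrow> t * ?d k < t * ?d i) \<and> (k \<notin> S \<longrightarrow> t * ?d i < t * ?d k)"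
          using d k t by (auto simp: shard_cell_def)
        moreover have "(k \<in> S \<longrightarrow> y k \<le> y i) \<and> (k \<notin> S \<longrightarrow> y i \<le> y k)" using y k by (auto simp: shard_cone_def)
        ultimately show ?thesis by auto
      qed
      then show "?g t \<in> shard_cell n i j S" using y d VA_lin[of y n ?d t]
        by (auto simp: shard_cell_def HA_def shard_cone_def)
    qed
    then show "y \<in> closure (shard_cell n i j S)" by simp
  qed
qed

lemma shards_of_HA:
  assumes "1 \<le> i" "i < j" "j \<le> n"
  shows "shards_of n (HA n i j) = range (shard_cone n i j)"
proof -
  have "components (uncut_part n i j) = range (shard_cell n i j)"
  proof
    show "range (shard_cell n i j) \<subseteq> components (uncut_part n i j)"
      using shard_cell_component[OF assms] by auto
    show "components (uncut_part n i j) \<subseteq> range (shard_cell n i j)"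
    proof
      fix C assume C: "C \<in> components (uncut_part n i j)"
      then obtain x where x: "x \<in> C" using in_components_nonempty by blast
      then have "x \<in> uncut_part n i j" using C in_components_subset by blast
      then have "x \<in> shard_cell n i j {k. x k < x i}" by (force simp: shard_cell_def uncut_part_def)
      then have "C = shard_cell n i j {k. x k < x i}"
        using components_nonoverlap[OF C shard_cell_component[OF assms]] x by blast
      then show "C \<in> range (shard_cell n i j)" by blast
    qed
  qed
  then show ?thesis unfolding shards_of_def uncut_part_eq[OF assms]
    using closure_shard_cell[OF assms] by (auto simp: image_image)
qed

lemma shardsA_eq: "shardsA n = {shard_cone n i j S | i j S. 1 \<le> i \<and> i < j \<and> j \<le> n}"
  unfolding shardsA_def arrA_def using shards_of_HA by fastforce

section \<open>Relations defined by shards\<close>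

text \<open>The inequalities x a \<le> x b, (a,b) in R, cutting out a shard of H_ij:
  x_i = x_j, x_k \<le> x_i for the intermediate k in S and x_i \<le> x_k for the others.\<close>
definition shard_rel :: "nat \<Rightarrow> nat \<Rightarrow> nat set \<Rightarrow> (nat \<times> nat) set" where
  "shard_rel i j S = {(i,j),(j,i)} \<union> {(k,i)|k. i < k \<and> k < j \<and> k \<in> S}
     \<union> {(i,k)|k. i < k \<and> k < j \<and> k \<notin> S}"

text \<open>Relations that are unions of shard relations (each pair of R lies in a shard
  relation contained in R); every intersection of shards is the cone of such a relation.\<close>
definition shard_union :: "nat \<Rightarrow> (nat \<times> nat) set \<Rightarrow> bool" where
  "shard_union n R \<longleftrightarrow> (\<forall>p\<in>R. \<exists>i j S. 1 \<le> i \<and> i < j \<and> j \<le> n \<and> shard_rel i j S \<subseteq> R \<and> p \<in> shard_rel i j S)"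

definition coneR :: "nat \<Rightarrow> (nat \<times> nat) set \<Rightarrow> (nat \<Rightarrow> real) set" where
  "coneR n R = {x\<in>VA n. \<forall>(a,b)\<in>R. x a \<le> x b}"

lemma shard_cone_eq_coneR: "shard_cone n i j S = coneR n (shard_rel i j S)"
  unfolding shard_cone_def coneR_def shard_rel_def by (auto intro: antisym)

lemma shard_intersection_is_coneR:
  assumes "X \<in> shard_intersections n"
  shows "\<exists>R. shard_union n R \<and> X = coneR n R"
proof -
  obtain S where S: "X = VA n \<inter> \<Inter>S" "S \<subseteq> shardsA n"
    using assms unfolding shard_intersections_def by blast
  define I where "I = {(i,j,T). 1 \<le> i \<and> i < j \<and> j \<le> n \<and> shard_cone n i j T \<in> S}"
  define R where "R = (\<Union>(i,j,T)\<in>I. shard_rel i j T)"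
  have "shard_union n R" unfolding shard_union_def R_def I_def by fast
  moreover have "X = coneR n R"
  proof
    show "X \<subseteq> coneR n R"
      using S(1) shard_cone_eq_coneR by (fastforce simp: coneR_def R_def I_def)
    show "coneR n R \<subseteq> X"
    proof
      fix x assume x: "x \<in> coneR n R"
      have "x \<in> Y" if "Y \<in> S" for Y
      proof -
        obtain i j T where ijT: "1 \<le> i" "i < j" "j \<le> n" "Y = shard_cone n i j T"
          using \<open>Y \<in> S\<close> S(2) shardsA_eq by blast
        then have "shard_rel i j T \<subseteq> R" using \<open>Y \<in> S\<close> by (auto simp: R_def I_def)
        then show ?thesis using x ijT(4) by (auto simp: shard_cone_eq_coneR coneR_def)
      qed
      then show "x \<in> X" using x S(1) by (auto simp: coneR_def)
    qed
  qed
  ultimately show ?thesis by blast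
qed

section \<open>The preorder generated by a union of shard relations\<close>

text \<open>The preorder R* of a union of shard relations; its equivalence classes will be
  the runs of the word w.\<close>
locale shard_preorder =
  fixes n :: nat and R :: "(nat \<times> nat) set"
  assumes shard_union: "shard_union n R"
begin

abbreviation le :: "nat \<Rightarrow> nat \<Rightarrow> bool" where "le a b \<equiv> (a,b) \<in> R\<^sup>*"
abbreviation eqv :: "nat \<Rightarrow> nat \<Rightarrow> bool" where "eqv a b \<equiv> le a b \<and> le b a"

lemma run_witness:
  assumes "(u,v) \<in> R"
  obtains i j where "i < j" "(i,j) \<in> R" "(j,i) \<in> R" "i = u \<or> i = v" "u \<in> {i..j}" "v \<in> {i..j}"
    "\<forall>k. i < k \<and> k < j \<longrightarrow> (k,i) \<in> R \<or> (i,k) \<in> R"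
proof -
  obtain i j S where ij: "i < j" "shard_rel i j S \<subseteq> R" "(u,v) \<in> shard_rel i j S"
    using shard_union assms unfolding shard_union_def by blast
  have "(k,i) \<in> R \<or> (i,k) \<in> R" if "i < k" "k < j" for k
    using ij(2) that by (cases "k \<in> S") (auto simp: shard_rel_def)
  moreover have "(i,j) \<in> R" "(j,i) \<in> R" using ij(2) by (auto simp: shard_rel_def)
  moreover have "i = u \<or> i = v" "u \<in> {i..j}" "v \<in> {i..j}" using ij(1,3) by (auto simp: shard_rel_def)
  ultimately show thesis using that ij(1) by blast
qed

lemma R_range:
  assumes "(a,b) \<in> R"
  shows "a \<in> {1..n} \<and> b \<in> {1..n}"
proof -
  obtain i j S where "1 \<le> i" "i < j" "j \<le> n" "(a,b) \<in> shard_rel i j S"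
    using shard_union assms unfolding shard_union_def by blast
  then show ?thesis by (auto simp: shard_rel_def)
qed

lemma le_range: "le a b \<Longrightarrow> a = b \<or> (a \<in> {1..n} \<and> b \<in> {1..n})"
  by (induction rule: rtrancl_induct) (auto dest: R_range)

lemma eqv_trans: "eqv a b \<Longrightarrow> eqv b c \<Longrightarrow> eqv a c"
  by (meson rtrancl_trans)

lemma chain_crosses:
  assumes "le a b"
  shows "a \<noteq> k \<longrightarrow> b \<noteq> k \<longrightarrow> (a < k) \<noteq> (b < k) \<longrightarrow> (le a k \<and> le k b) \<or>
    (\<exists>u v. le a u \<and> (u,v) \<in> R \<and> le v b \<and> u \<noteq> k \<and> v \<noteq> k \<and> (u < k) \<noteq> (v < k))"
  using assms
proof (induction rule: rtrancl_induct)
  case (step c b)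
  show ?case
  proof (intro impI)
    assume h: "a \<noteq> k" "b \<noteq> k" "(a < k) \<noteq> (b < k)"
    consider "c = k" | "c \<noteq> k" "(a < k) = (c < k)" | "c \<noteq> k" "(a < k) \<noteq> (c < k)" by blast
    then show "(le a k \<and> le k b) \<or> (\<exists>u v. le a u \<and> (u,v) \<in> R \<and> le v b \<and> u \<noteq> k \<and> v \<noteq> k \<and> (u < k) \<noteq> (v < k))"
    proof cases
      case 1
      then show ?thesis using step(1,2) by auto
    next
      case 2
      then show ?thesis using step(1,2) h by (intro disjI2 exI[of _ c] exI[of _ b]) auto
    next
      case 3
      then have "(le a k \<and> le k c) \<or> (\<exists>u v. le a u \<and> (u,v) \<in> R \<and> le v c \<and> u \<noteq> k \<and> v \<noteq> k \<and> (u < k) \<noteq> (v < k))"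
        using step.IH h by blast
      then show ?thesis using step(2) by (meson rtrancl.rtrancl_into_rtrancl)
    qed
  qed
qed simp

text \<open>Indices lying between two equivalent indices are comparable to them; this is
  what makes the inequality conditions (ii) of C(w) follow from the preorder.\<close>
lemma between_eqv_comparable:
  assumes "eqv a b" "a < k" "k < b" "\<not> eqv k a"
  shows "le k a \<or> le a k"
proof -
  have "(le a k \<and> le k b) \<or> (\<exists>u v. le a u \<and> (u,v) \<in> R \<and> le v b \<and> u \<noteq> k \<and> v \<noteq> k \<and> (u < k) \<noteq> (v < k))"
    using chain_crosses[of a b k] assms(1-3) by simp
  then show ?thesis
  proof
    assume "\<exists>u v. le a u \<and> (u,v) \<in> R \<and> le v b \<and> u \<noteq> k \<and> v \<noteq> k \<and> (u < k) \<noteq> (v < k)"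
    then obtain u v where uv: "le a u" "(u,v) \<in> R" "le v b" "u \<noteq> k" "v \<noteq> k" "(u < k) \<noteq> (v < k)"
      by blast
    have uv_le: "le u v" using uv(2) by (rule r_into_rtrancl)
    have ba: "le b a" using assms(1) by blast
    have ua: "eqv u a" using uv(1) rtrancl_trans[OF rtrancl_trans[OF uv_le uv(3)] ba] by blast
    have va: "eqv v a" using rtrancl_trans[OF uv(1) uv_le] rtrancl_trans[OF uv(3) ba] by blast
    obtain i j where ij: "i < j" "(i,j) \<in> R" "(j,i) \<in> R" "i = u \<or> i = v" "u \<in> {i..j}" "v \<in> {i..j}"
        "\<forall>k. i < k \<and> k < j \<longrightarrow> (k,i) \<in> R \<or> (i,k) \<in> R"
      by (rule run_witness[OF uv(2)])
    have ia: "eqv i a" using ij(4) ua va by blast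
    have "i < k" "k < j" using ij(4-6) uv(4-6) by auto
    then consider "(k,i) \<in> R" | "(i,k) \<in> R" using ij(7) by blast
    then show ?thesis
    proof cases
      case 1
      then show ?thesis using rtrancl_trans[OF r_into_rtrancl[OF 1]] ia by blast
    next
      case 2
      then show ?thesis using rtrancl_trans[OF _ r_into_rtrancl[OF 2]] ia by blast
    qed
  qed blast
qed

lemma chain_exit:
  assumes "le a b"
  shows "P a \<longrightarrow> \<not> P b \<longrightarrow> (\<exists>u v. le a u \<and> (u,v) \<in> R \<and> le v b \<and> P u \<and> \<not> P v)"
  using assms
proof (induction rule: rtrancl_induct)
  case (step c b)
  show ?case
  proof (intro impI)
    assume "P a" "\<not> P b"
    show "\<exists>u v. le a u \<and> (u,v) \<in> R \<and> le v b \<and> P u \<and> \<not> P v"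
    proof (cases "P c")
      case True
      then show ?thesis using step(1,2) \<open>\<not> P b\<close> by blast
    next
      case False
      then obtain u v where "le a u" "(u,v) \<in> R" "le v c" "P u" "\<not> P v"
        using step.IH \<open>P a\<close> by blast
      moreover have "le v b" using \<open>le v c\<close> step(2) by (rule rtrancl.rtrancl_into_rtrancl)
      ultimately show ?thesis by blast
    qed
  qed
qed simp

section \<open>Listing the classes of the preorder\<close>

text \<open>Such a listing, read as a word, has the classes as its runs.\<close>
definition linear_ext :: "nat list \<Rightarrow> bool" where
  "linear_ext L \<longleftrightarrow> sorted_wrt (\<lambda>a b. le b a \<longrightarrow> le a b) L"

definition classes_decreasing :: "nat list \<Rightarrow> bool" where
  "classes_decreasing L \<longleftrightarrow> sorted_wrt (\<lambda>a b. eqv a b \<longrightarrow> b < a) L"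

definition classes_contiguous :: "nat list \<Rightarrow> bool" where
  "classes_contiguous L \<longleftrightarrow>
     (\<forall>p r q. p < r \<and> r < q \<and> q < length L \<and> eqv (L!p) (L!q) \<longrightarrow> eqv (L!r) (L!p))"

definition ascent_between_classes :: "nat list \<Rightarrow> bool" where
  "ascent_between_classes L \<longleftrightarrow> successively (\<lambda>a b. \<not> eqv a b \<longrightarrow> a < b) L"

definition minimal_class_top :: "nat set \<Rightarrow> nat \<Rightarrow> bool" where
  "minimal_class_top U h \<longleftrightarrow> (\<forall>a\<in>U. le a h \<longrightarrow> le h a) \<and> (\<forall>a\<in>U. eqv a h \<longrightarrow> a \<le> h)"

definition good_listing :: "nat set \<Rightarrow> nat list \<Rightarrow> bool" where
  "good_listing U L \<longleftrightarrow> distinct L \<and> set L = U \<and> linear_ext L \<and> classes_decreasing L \<and>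
     classes_contiguous L \<and> ascent_between_classes L \<and> (L \<noteq> [] \<longrightarrow> minimal_class_top U (hd L))"

lemma classes_contiguous_append:
  assumes "classes_contiguous xs" "classes_contiguous ys" "\<forall>x\<in>set xs. \<forall>y\<in>set ys. \<not> eqv x y"
  shows "classes_contiguous (xs @ ys)"
  unfolding classes_contiguous_def
proof (intro allI impI)
  fix p r q assume h: "p < r \<and> r < q \<and> q < length (xs @ ys) \<and> eqv ((xs @ ys)!p) ((xs @ ys)!q)"
  consider "q < length xs" | "length xs \<le> p" | "p < length xs" "length xs \<le> q" by linarith
  then show "eqv ((xs @ ys)!r) ((xs @ ys)!p)"
  proof cases
    case 1
    then have "(xs @ ys)!p = xs!p" "(xs @ ys)!r = xs!r" "(xs @ ys)!q = xs!q"
      using h by (auto simp: nth_append)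
    then show ?thesis
      using 1 h assms(1)[unfolded classes_contiguous_def, rule_format, of p r q] by simp
  next
    case 2
    then have "p - length xs < r - length xs" "r - length xs < q - length xs"
      "q - length xs < length ys" using h by auto
    moreover have "(xs @ ys)!p = ys!(p - length xs)" "(xs @ ys)!r = ys!(r - length xs)"
      "(xs @ ys)!q = ys!(q - length xs)" using 2 h by (auto simp: nth_append)
    ultimately show ?thesis
      using h assms(2)[unfolded classes_contiguous_def, rule_format, of "p - length xs" "r - length xs"
          "q - length xs"] by simp
  next
    case 3
    then have "(xs @ ys)!p \<in> set xs" "(xs @ ys)!q \<in> set ys" using h by (auto simp: nth_append)
    then show ?thesis using h assms(3) by blast
  qed
qed

lemma class_listing:
  assumes "finite B" "\<forall>x\<in>B. \<forall>y\<in>B. eqv x y"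
  defines "A \<equiv> rev (sorted_list_of_set B)"
  shows "distinct A" "set A = B" "linear_ext A" "classes_decreasing A" "classes_contiguous A"
    "ascent_between_classes A" "B \<noteq> {} \<Longrightarrow> hd A = Max B" "B \<noteq> {} \<Longrightarrow> last A = Min B"
proof -
  have dec: "sorted_wrt (>) A" by (simp add: A_def sorted_wrt_rev strict_sorted_list_of_set)
  show "distinct A" "set A = B" using assms(1) by (auto simp: A_def)
  show "last A = Min B" if "B \<noteq> {}"
    using assms(1) that by (simp add: A_def last_rev sorted_list_of_set_nonempty)
  show "hd A = Max B" if "B \<noteq> {}"
  proof -
    have "A \<noteq> []" using \<open>set A = B\<close> that by auto
    then have "\<forall>y\<in>set A. y \<le> hd A" using dec by (cases A) auto
    then show ?thesis using \<open>set A = B\<close> \<open>A \<noteq> []\<close> assms(1) by (intro Max_eqI[symmetric]) auto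
  qed
  have inB: "\<And>p. p < length A \<Longrightarrow> A!p \<in> B" using \<open>set A = B\<close> by auto
  show "linear_ext A" unfolding linear_ext_def
    by (rule sorted_wrt_mono_rel[OF _ dec]) (use assms(2) \<open>set A = B\<close> in simp)
  show "classes_decreasing A" unfolding classes_decreasing_def
    by (rule sorted_wrt_mono_rel[OF _ dec]) blast
  show "classes_contiguous A" using assms(2) inB by (auto simp: classes_contiguous_def)
  show "ascent_between_classes A" using assms(2) inB
    by (auto simp: ascent_between_classes_def successively_conv_nth)
qed

text \<open>The combinatorial heart: listing first the minimal class with the smallest
  least element e0, the next class starts with an element larger than e0.  If its top
  h0 is not minimal in U, a relation (u,v) leaves the class of e0 towards h0, and the
  run witnessing (u,v) puts an element of the class of h0 above u \<ge> e0.\<close>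
lemma greedy_class_ascent:
  assumes up: "\<forall>a\<in>U. \<forall>b. le a b \<longrightarrow> b \<in> U"
    and e0: "e0 \<in> U" "\<forall>b\<in>U. le b e0 \<longrightarrow> le e0 b"
    and e0_least: "\<forall>x\<in>U. (\<forall>b\<in>U. le b x \<longrightarrow> le x b) \<longrightarrow> e0 \<le> x"
    and h0: "h0 \<in> U" "\<not> eqv h0 e0" "minimal_class_top {a\<in>U. \<not> eqv a e0} h0"
  shows "e0 < h0"
proof (cases "\<forall>a\<in>U. le a h0 \<longrightarrow> le h0 a")
  case True
  then have "e0 \<le> h0" using e0_least h0(1) by blast
  moreover have "h0 \<noteq> e0" using h0(2) by blast
  ultimately show ?thesis by simp
next
  case False
  let ?U' = "{a\<in>U. \<not> eqv a e0}"
  have top: "\<And>a. a \<in> ?U' \<Longrightarrow> le a h0 \<Longrightarrow> le h0 a \<and> a \<le> h0"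
    using h0(3) unfolding minimal_class_top_def by blast
  have e0_below: "e0 \<le> x" if "x \<in> U" "eqv x e0" for x
    using e0_least e0(2) that by (meson rtrancl_trans)
  from False obtain a where a: "a \<in> U" "le a h0" "\<not> le h0 a" by blast
  then have "eqv a e0" using top by blast
  then obtain u v where uv: "le a u" "(u,v) \<in> R" "le v h0" "eqv u e0" "\<not> eqv v e0"
    using chain_exit[OF a(2), of "\<lambda>x. eqv x e0"] h0(2) by (auto dest: eqv_trans)
  have "u \<in> U" "v \<in> U" using uv(1,2) a(1) up by (blast intro: r_into_rtrancl)+
  then have e0u: "e0 \<le> u" and vh: "v \<le> h0" using e0_below uv(3-5) top by blast+
  obtain i j where ij: "i < j" "(i,j) \<in> R" "(j,i) \<in> R" "i = u \<or> i = v" "u \<in> {i..j}" "v \<in> {i..j}"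
    by (rule run_witness[OF uv(2)])
  show ?thesis
  proof (cases "i = u")
    case True
    then have "eqv j e0" using ij(2,3) uv(4) by (meson rtrancl_trans r_into_rtrancl)
    then have "v \<noteq> u" "v \<noteq> j" using uv(4,5) by blast+
    then have "u < v" using ij(5,6) True by auto
    then show ?thesis using e0u vh by simp
  next
    case False
    then have iv: "i = v" using ij(4) by blast
    have "j \<in> U" using \<open>v \<in> U\<close> iv ij(2) up by (blast intro: r_into_rtrancl)
    moreover have "\<not> eqv j e0" using iv ij(2,3) uv(5) by (meson rtrancl_trans r_into_rtrancl)
    moreover have "le j h0" using iv ij(3) uv(3) by (meson rtrancl_trans r_into_rtrancl)
    ultimately have "j \<le> h0" using top by blast
    moreover have "u \<noteq> j" using \<open>\<not> eqv j e0\<close> uv(4) by blast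
    ultimately show ?thesis using e0u ij(5) by auto
  qed
qed

text \<open>Every finite nonempty set contains a minimal element of the preorder: take one
  with fewest predecessors.\<close>
lemma exists_minimal:
  assumes "finite U" "U \<noteq> {}"
  shows "\<exists>a\<in>U. \<forall>b\<in>U. le b a \<longrightarrow> le a b"
proof -
  obtain a0 where "a0 \<in> U" using assms(2) by blast
  then obtain a where a: "a \<in> U" "\<And>y. y \<in> U \<Longrightarrow> card {b\<in>U. le b a} \<le> card {b\<in>U. le b y}"
    using ex_has_least_nat[of "\<lambda>a. a \<in> U" a0 "\<lambda>a. card {b\<in>U. le b a}"] by blast
  have "le a b" if b: "b \<in> U" "le b a" for b
  proof (rule ccontr)
    assume "\<not> le a b"
    have "{c\<in>U. le c b} \<subseteq> {c\<in>U. le c a}" using b(2) rtrancl_trans[of _ b R a] by blast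
    moreover have "a \<notin> {c\<in>U. le c b}" using \<open>\<not> le a b\<close> by blast
    ultimately have "{c\<in>U. le c b} \<subset> {c\<in>U. le c a}" using a(1) by blast
    then have "card {c\<in>U. le c b} < card {c\<in>U. le c a}"
      using assms(1) by (intro psubset_card_mono) auto
    then show False using a(2)[OF b(1)] by simp
  qed
  then show ?thesis using a(1) by blast
qed

lemma prepend_minimal_class:
  assumes fin: "finite U" and up: "\<forall>a\<in>U. \<forall>b. le a b \<longrightarrow> b \<in> U"
    and e0: "e0 \<in> U" "\<forall>b\<in>U. le b e0 \<longrightarrow> le e0 b"
    and e0_least: "\<forall>x\<in>U. (\<forall>b\<in>U. le b x \<longrightarrow> le x b) \<longrightarrow> e0 \<le> x"
    and B0_def: "B0 = {a\<in>U. eqv a e0}" and U'_def: "U' = {a\<in>U. \<not> eqv a e0}"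
    and L'_good: "good_listing U' L'"
  shows "good_listing U (rev (sorted_list_of_set B0) @ L')"
proof -
  define A where "A = rev (sorted_list_of_set B0)"
  have B0_min: "\<forall>b\<in>U. le b x \<longrightarrow> le x b" if "x \<in> B0" for x
    using that e0(2) by (simp add: B0_def) (meson rtrancl_trans)
  have "e0 \<in> B0" "finite B0" using e0(1) fin by (auto simp: B0_def)
  have B0_eqv: "\<forall>x\<in>B0. \<forall>y\<in>B0. eqv x y" by (simp add: B0_def) (meson rtrancl_trans)
  have apart: "\<forall>x\<in>B0. \<forall>y\<in>U'. \<not> eqv x y" using eqv_trans unfolding B0_def U'_def by blast
  note A = class_listing[OF \<open>finite B0\<close> B0_eqv, folded A_def]
  have A_ne: "A \<noteq> []" using A(2) \<open>e0 \<in> B0\<close> by auto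
  have "e0 \<le> y" if "y \<in> B0" for y
  proof -
    have "y \<in> U" using that by (simp add: B0_def)
    then show ?thesis using e0_least B0_min[OF that] by blast
  qed
  then have "Min B0 = e0" using \<open>finite B0\<close> \<open>e0 \<in> B0\<close> by (intro Min_eqI) auto
  then have last_A: "last A = e0" using A(8) \<open>e0 \<in> B0\<close> by auto
  have hd_A: "hd A = Max B0" using A(7) \<open>e0 \<in> B0\<close> by auto
  have "Max B0 \<in> B0" using \<open>finite B0\<close> \<open>e0 \<in> B0\<close> by (intro Max_in) auto
  from L'_good have L'_set: "set L' = U'" and L'_dist: "distinct L'" by (auto simp: good_listing_def)
  have junction: "e0 < hd L'" if "L' \<noteq> []"
  proof (rule greedy_class_ascent[OF up e0 e0_least])
    have "hd L' \<in> U'" using L'_set hd_in_set[OF that] by simp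
    then show "hd L' \<in> U" "\<not> eqv (hd L') e0" by (simp_all add: U'_def)
    show "minimal_class_top {a\<in>U. \<not> eqv a e0} (hd L')"
      using L'_good that unfolding good_listing_def U'_def by blast
  qed
  have "good_listing U (A @ L')"
    unfolding good_listing_def
  proof (intro conjI impI)
    show "distinct (A @ L')" using A(1,2) L'_set L'_dist by (auto simp: B0_def U'_def)
    show "set (A @ L') = U" using A(2) L'_set by (auto simp: B0_def U'_def)
    have "le x y" if "x \<in> set A" "y \<in> set L'" "le y x" for x y
    proof -
      have "x \<in> B0" "y \<in> U" using that(1,2) A(2) L'_set by (auto simp: U'_def)
      then show ?thesis using B0_min that(3) by blast
    qed
    then have "\<forall>x\<in>set A. \<forall>y\<in>set L'. le y x \<longrightarrow> le x y" by blast
    then show "linear_ext (A @ L')"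
      using A(3) L'_good by (simp add: good_listing_def linear_ext_def sorted_wrt_append)
    show "classes_decreasing (A @ L')"
      using A(2,4) L'_good L'_set apart unfolding classes_decreasing_def sorted_wrt_append
      by (auto simp: good_listing_def classes_decreasing_def)
    show "classes_contiguous (A @ L')"
      using A(2,5) L'_good L'_set apart by (simp add: good_listing_def classes_contiguous_append)
    show "ascent_between_classes (A @ L')"
      using A(6) L'_good junction last_A
      by (auto simp: good_listing_def ascent_between_classes_def successively_append_iff)
    show "minimal_class_top U (hd (A @ L'))"
      unfolding minimal_class_top_def hd_append2[OF A_ne] hd_A
    proof (intro conjI ballI impI)
      fix x assume "x \<in> U" "le x (Max B0)"
      then show "le (Max B0) x" using B0_min[OF \<open>Max B0 \<in> B0\<close>] by blast
    next
      fix x assume "x \<in> U" "eqv x (Max B0)"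
      then have "x \<in> B0" using \<open>Max B0 \<in> B0\<close> by (simp add: B0_def) (meson rtrancl_trans)
      then show "x \<le> Max B0" using \<open>finite B0\<close> by simp
    qed
  qed
  then show ?thesis by (simp only: A_def)
qed

text \<open>Every finite upward closed set of indices has a good listing, built class by
  class: minimal class with smallest least element first.\<close>
lemma good_listing_exists:
  assumes "finite U" "\<forall>a\<in>U. \<forall>b. le a b \<longrightarrow> b \<in> U"
  shows "\<exists>L. good_listing U L"
  using assms
proof (induction "card U" arbitrary: U rule: less_induct)
  case less
  note up = less.prems(2)
  show ?case
  proof (cases "U = {}")
    case True
    then show ?thesis
      by (intro exI[of _ "[]"]) (simp add: good_listing_def linear_ext_def classes_decreasing_def
          classes_contiguous_def ascent_between_classes_def)
  next
    case False
    define M where "M = {a\<in>U. \<forall>b\<in>U. le b a \<longrightarrow> le a b}"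
    have "finite M" "M \<noteq> {}" using less.prems(1) exists_minimal[OF less.prems(1) False]
      by (auto simp: M_def)
    define e0 where "e0 = Min M"
    have "e0 \<in> M" unfolding e0_def using \<open>finite M\<close> \<open>M \<noteq> {}\<close> by (rule Min_in)
    then have e0: "e0 \<in> U" "\<forall>b\<in>U. le b e0 \<longrightarrow> le e0 b" by (simp_all add: M_def)
    have e0_least: "\<forall>x\<in>U. (\<forall>b\<in>U. le b x \<longrightarrow> le x b) \<longrightarrow> e0 \<le> x"
      using \<open>finite M\<close> by (auto simp: e0_def M_def intro!: Min_le)
    let ?U' = "{a\<in>U. \<not> eqv a e0}"
    have "card ?U' < card U"
      by (rule psubset_card_mono) (use less.prems(1) e0(1) in auto)
    moreover have "finite ?U'" using less.prems(1) by simp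
    moreover have "\<forall>x\<in>?U'. \<forall>b. le x b \<longrightarrow> b \<in> ?U'"
    proof (intro ballI allI impI)
      fix x b assume x: "x \<in> ?U'" "le x b"
      then have "b \<in> U" using up by blast
      moreover have "\<not> eqv b e0"
      proof
        assume "eqv b e0"
        then have "le x e0" using x(2) by (meson rtrancl_trans)
        then show False using x(1) e0(2) by blast
      qed
      ultimately show "b \<in> ?U'" by simp
    qed
    ultimately obtain L' where "good_listing ?U' L'" using less.hyps by blast
    then show ?thesis using prepend_minimal_class[OF less.prems e0 e0_least refl refl] by blast
  qed
qed

end

lemma (in shard_preorder) coneR_le:
  assumes "x \<in> coneR n R" "le a b"
  shows "x a \<le> x b"
  using assms(2)
proof (induction rule: rtrancl_induct)
  case (step c d)
  then show ?case using assms(1) by (force simp: coneR_def)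
qed simp

section \<open>Words whose runs are the classes\<close>

locale run_word = shard_preorder +
  fixes w :: "nat \<Rightarrow> nat"
  assumes perm: "w permutes {1..n}"
    and order: "\<And>r s. r \<in> {1..n} \<Longrightarrow> s \<in> {1..n} \<Longrightarrow> le (w r) (w s) \<Longrightarrow> \<not> le (w s) (w r) \<Longrightarrow> r < s"
    and run_decreasing: "\<And>r s. 1 \<le> r \<Longrightarrow> r < s \<Longrightarrow> s \<le> n \<Longrightarrow> eqv (w r) (w s) \<Longrightarrow> w s < w r"
    and run_contiguous:
      "\<And>r t s. 1 \<le> r \<Longrightarrow> r < t \<Longrightarrow> t < s \<Longrightarrow> s \<le> n \<Longrightarrow> eqv (w r) (w s) \<Longrightarrow> eqv (w t) (w r)"
    and class_ascent: "\<And>r. 1 \<le> r \<Longrightarrow> r < n \<Longrightarrow> \<not> eqv (w r) (w (Suc r)) \<Longrightarrow> w r < w (Suc r)"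
begin

definition class_of :: "nat \<Rightarrow> nat set" where "class_of c = {j\<in>{1..n}. eqv c j}"

lemma class_of_eqv: "i \<in> class_of c \<Longrightarrow> j \<in> class_of c \<Longrightarrow> eqv i j"
  by (simp add: class_of_def) (meson rtrancl_trans)

lemma w_in: "r \<in> {1..n} \<Longrightarrow> w r \<in> {1..n}"
  using permutes_in_image[OF perm] by blast

lemma inv_in: "k \<in> {1..n} \<Longrightarrow> inv w k \<in> {1..n}"
  using permutes_in_image[OF permutes_inv[OF perm]] by blast

lemma w_inv: "w (inv w k) = k"
  using permutes_inverses(1)[OF perm] by blast

lemma order_inv: "i \<in> {1..n} \<Longrightarrow> k \<in> {1..n} \<Longrightarrow> le i k \<Longrightarrow> \<not> le k i \<Longrightarrow> inv w i < inv w k"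
  using order[of "inv w i" "inv w k"] inv_in w_inv by metis

text \<open>A maximal decreasing run of w is a class: a run consists of equivalent letters
  (an ascent would separate classes), and the neighbours of a run are not equivalent to
  it (the class would otherwise extend the run by contiguity and decrease).\<close>
lemma block_is_class:
  assumes "Bk \<in> blocks n w"
  shows "\<exists>c\<in>{1..n}. Bk = class_of c"
proof -
  obtain a b where ab: "Bk = w ` {a..b}" "1 \<le> a" "a \<le> b" "b \<le> n"
      "\<forall>r. a \<le> r \<and> r < b \<longrightarrow> w r > w (Suc r)" "a = 1 \<or> w (a - 1) < w a" "b = n \<or> w b < w (Suc b)"
    using assms unfolding blocks_def by blast
  have chain: "a + d \<le> b \<Longrightarrow> eqv (w a) (w (a + d))" for d
  proof (induction d)
    case (Suc d)
    then have "eqv (w a) (w (a + d))" by simp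
    moreover have "eqv (w (a + d)) (w (Suc (a + d)))"
    proof (rule ccontr)
      assume "\<not> eqv (w (a + d)) (w (Suc (a + d)))"
      then have "w (a + d) < w (Suc (a + d))" using class_ascent[of "a + d"] ab(2-4) Suc.prems by simp
      moreover have "w (Suc (a + d)) < w (a + d)" using ab(5) Suc.prems by simp
      ultimately show False by simp
    qed
    ultimately show ?case by (auto intro: rtrancl_trans)
  qed simp
  have run_eqv: "a \<le> r \<Longrightarrow> r \<le> b \<Longrightarrow> eqv (w a) (w r)" for r
    using chain[of "r - a"] by simp
  have "Bk = class_of (w a)"
  proof
    show "Bk \<subseteq> class_of (w a)" using ab run_eqv w_in by (auto simp: class_of_def)
    show "class_of (w a) \<subseteq> Bk"
    proof
      fix j assume "j \<in> class_of (w a)"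
      then have j: "j \<in> {1..n}" "eqv (w a) j" by (auto simp: class_of_def)
      define s where "s = inv w j"
      have s: "s \<in> {1..n}" "w s = j" using inv_in[OF j(1)] w_inv by (auto simp: s_def)
      have "\<not> s < a"
      proof
        assume sa: "s < a"
        then have a1: "a \<noteq> 1" "1 \<le> a - 1" using s by auto
        have "eqv (w (a - 1)) (w a)"
        proof (cases "s = a - 1")
          case True then show ?thesis using s j by simp
        next
          case False
          then have "eqv (w (a - 1)) (w s)" using run_contiguous[of s "a - 1" a] s sa ab j by auto
          then show ?thesis using s j by (auto intro: rtrancl_trans)
        qed
        then have "w a < w (a - 1)" using run_decreasing[of "a - 1" a] a1 ab by simp
        then show False using ab(6) a1 by simp
      qed
      moreover have "\<not> b < s"
      proof
        assume bs: "b < s"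
        have ab_eqv: "eqv (w a) (w b)" using run_eqv ab by simp
        have "eqv (w (Suc b)) (w b)"
        proof (cases "s = Suc b")
          case True then show ?thesis using s j ab_eqv by (auto intro: rtrancl_trans)
        next
          case False
          then show ?thesis using run_contiguous[of b "Suc b" s] s bs ab j ab_eqv by (auto intro: rtrancl_trans)
        qed
        then have "w (Suc b) < w b" using run_decreasing[of b "Suc b"] ab bs s by auto
        then show False using ab(7) bs s by auto
      qed
      ultimately show "j \<in> Bk" using ab(1) s by auto
    qed
  qed
  then show ?thesis using ab w_in by auto
qed

text \<open>Conversely every class is a maximal decreasing run: its positions form an
  interval (contiguity), w decreases along it and ascends at both ends.\<close>
lemma class_is_block:
  assumes c: "c \<in> {1..n}"
  shows "class_of c \<in> blocks n w"
proof -
  define P where "P = {r\<in>{1..n}. eqv (w r) c}"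
  have "inv w c \<in> P" using inv_in[OF c] w_inv by (auto simp: P_def)
  then have "P \<noteq> {}" by blast
  moreover have "finite P" by (simp add: P_def)
  ultimately have aP: "Min P \<in> P" and bP: "Max P \<in> P"
    and bounds: "\<And>r. r \<in> P \<Longrightarrow> Min P \<le> r \<and> r \<le> Max P" by auto
  define a b where "a = Min P" and "b = Max P"
  have ab: "1 \<le> a" "a \<le> b" "b \<le> n" using aP bP bounds by (auto simp: a_def b_def P_def)
  have interval: "t \<in> P" if "a \<le> t" "t \<le> b" for t
  proof (cases "t = a \<or> t = b")
    case False
    have "eqv (w a) (w b)" using aP bP by (auto simp: a_def b_def P_def intro: rtrancl_trans)
    then have "eqv (w t) (w a)" using run_contiguous[of a t b] False that ab by simp
    then show ?thesis using aP that ab by (auto simp: a_def P_def intro: rtrancl_trans)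
  qed (use aP bP a_def b_def in auto)
  have "class_of c = w ` {a..b}"
  proof
    show "class_of c \<subseteq> w ` {a..b}"
    proof
      fix j assume "j \<in> class_of c"
      then have "inv w j \<in> P" using inv_in w_inv by (auto simp: class_of_def P_def)
      then show "j \<in> w ` {a..b}" using bounds w_inv by (metis a_def b_def atLeastAtMost_iff image_eqI)
    qed
    show "w ` {a..b} \<subseteq> class_of c"
      using interval w_in by (auto simp: P_def class_of_def)
  qed
  moreover have "w r > w (Suc r)" if "a \<le> r" "r < b" for r
  proof -
    have "eqv (w r) (w (Suc r))" using interval[of r] interval[of "Suc r"] that
      by (auto simp: P_def intro: rtrancl_trans)
    then show ?thesis using run_decreasing[of r "Suc r"] that ab by simp
  qed
  moreover have "w (a - 1) < w a" if "a \<noteq> 1"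
  proof -
    have "a - 1 \<notin> P" using bounds[of "a - 1"] that ab by (auto simp: a_def)
    then have "\<not> eqv (w (a - 1)) (w a)"
      using that ab aP by (auto simp: P_def a_def intro: rtrancl_trans)
    then show ?thesis using class_ascent[of "a - 1"] that ab by simp
  qed
  moreover have "w b < w (Suc b)" if "b \<noteq> n"
  proof -
    have "Suc b \<notin> P" using bounds[of "Suc b"] by (auto simp: b_def)
    then have "\<not> eqv (w b) (w (Suc b))"
      using that ab bP by (auto simp: P_def b_def intro: rtrancl_trans)
    then show ?thesis using class_ascent[of b] that ab by simp
  qed
  ultimately show ?thesis unfolding blocks_def using ab by blast
qed

text \<open>For a word whose runs are the classes, C(w) is the cone of R: the equalities (i)
  say x is constant on classes, and the inequalities (ii) are exactly the relations
  between a class and the indices nested inside it.\<close>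
lemma coneR_subset_coneC: "coneR n R \<subseteq> coneC n w"
proof
  fix x assume x: "x \<in> coneR n R"
  have E: "x i = x j" if blk: "Bk \<in> blocks n w" and ij: "i \<in> Bk" "j \<in> Bk" for Bk i j
  proof -
    obtain c where "Bk = class_of c" using block_is_class[OF blk] by blast
    then have "eqv i j" using ij class_of_eqv by blast
    then show ?thesis using coneR_le[OF x, of i j] coneR_le[OF x, of j i] by simp
  qed
  have I: "(inv w k < inv w i \<longrightarrow> x k \<le> x i) \<and> (inv w i < inv w k \<longrightarrow> x i \<le> x k)"
    if blk: "Bk \<in> blocks n w" and ij: "i \<in> Bk" "j \<in> Bk" and k: "i < k" "k < j" "k \<notin> Bk" for Bk i j k
  proof -
    obtain c where c: "Bk = class_of c" using block_is_class[OF blk] by blast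
    have ijn: "i \<in> {1..n}" "j \<in> {1..n}" using ij c by (auto simp: class_of_def)
    have kn: "k \<in> {1..n}" using k ijn by auto
    have "\<not> eqv k i"
    proof
      assume "eqv k i"
      moreover have "eqv c i" using ij(1) c by (simp add: class_of_def)
      ultimately have "eqv c k" by (meson rtrancl_trans)
      then show False using k(3) kn c by (simp add: class_of_def)
    qed
    then have comparable: "le k i \<or> le i k"
      using between_eqv_comparable[OF class_of_eqv k(1,2)] ij c by blast
    show ?thesis
    proof (intro conjI impI)
      assume "inv w k < inv w i"
      then have "le k i" using comparable order_inv[OF ijn(1) kn] by fastforce
      then show "x k \<le> x i" by (rule coneR_le[OF x])
    next
      assume "inv w i < inv w k"
      then have "le i k" using comparable order_inv[OF kn ijn(1)] by fastforce
      then show "x i \<le> x k" by (rule coneR_le[OF x])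
    qed
  qed
  have "x \<in> VA n" using x by (simp add: coneR_def)
  then show "x \<in> coneC n w" unfolding coneC_def using E I by blast
qed

lemma coneC_subset_coneR: "coneC n w \<subseteq> coneR n R"
proof
  fix x assume x: "x \<in> coneC n w"
  have E: "\<And>Bk i j. Bk \<in> blocks n w \<Longrightarrow> i \<in> Bk \<Longrightarrow> j \<in> Bk \<Longrightarrow> x i = x j"
    and I: "\<And>Bk i j k. Bk \<in> blocks n w \<Longrightarrow> i \<in> Bk \<Longrightarrow> j \<in> Bk \<Longrightarrow> i < k \<Longrightarrow> k < j \<Longrightarrow> k \<notin> Bk \<Longrightarrow>
          (inv w k < inv w i \<longrightarrow> x k \<le> x i) \<and> (inv w i < inv w k \<longrightarrow> x i \<le> x k)"
    using x unfolding coneC_def by blast+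
  have "x a \<le> x b" if ab: "(a,b) \<in> R" for a b
  proof -
    have abn: "a \<in> {1..n}" "b \<in> {1..n}" using R_range[OF ab] by auto
    obtain i j where ij: "i < j" "(i,j) \<in> R" "(j,i) \<in> R" "i = a \<or> i = b" "a \<in> {i..j}" "b \<in> {i..j}"
      "\<forall>k. i < k \<and> k < j \<longrightarrow> (k,i) \<in> R \<or> (i,k) \<in> R"
      by (rule run_witness[OF ab])
    have jn: "j \<in> {1..n}" using R_range[OF ij(2)] by auto
    have eij: "eqv i j" using ij(2,3) by blast
    show ?thesis
    proof (cases "eqv a b")
      case True
      then have "a \<in> class_of a" "b \<in> class_of a" using abn by (auto simp: class_of_def)
      then have "x a = x b" by (rule E[OF class_is_block[OF abn(1)]])
      then show ?thesis by simp
    next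
      case False
      then have "\<not> le b a" using ab by blast
      then have pos: "inv w a < inv w b" using order_inv[OF abn] ab by blast
      show ?thesis
      proof (cases "i = a")
        case True
        have "b \<noteq> a" "b \<noteq> j" using False eij True by blast+
        then have k: "a < b" "b < j" using ij(5,6) True by auto
        have "a \<in> class_of a" "j \<in> class_of a" "b \<notin> class_of a"
          using abn jn eij True False by (auto simp: class_of_def)
        then show ?thesis using I[OF class_is_block[OF abn(1)], of a j b] k pos by blast
      next
        case False
        then have ib: "i = b" using ij(4) by blast
        have "a \<noteq> b" "a \<noteq> j" using \<open>\<not> eqv a b\<close> eij ib by blast+
        then have k: "b < a" "a < j" using ij(5,6) ib by auto
        have "b \<in> class_of b" "j \<in> class_of b" "a \<notin> class_of b"
          using abn jn eij ib \<open>\<not> eqv a b\<close> by (auto simp: class_of_def)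
        then show ?thesis using I[OF class_is_block[OF abn(2)], of b j a] k pos by blast
      qed
    qed
  qed
  then show "x \<in> coneR n R" using x by (auto simp: coneR_def coneC_def)
qed

lemma coneC_eq_coneR: "coneC n w = coneR n R"
  using coneC_subset_coneR coneR_subset_coneC by blast

end

definition word_of :: "nat \<Rightarrow> nat list \<Rightarrow> nat \<Rightarrow> nat" where
  "word_of n L r = (if r \<in> {1..n} then L!(r - 1) else r)"

lemma word_of_permutes:
  assumes "distinct L" "set L = {1..n}"
  shows "word_of n L permutes {1..n}"
proof (rule bij_imp_permutes)
  have len: "length L = n" using assms distinct_card by fastforce
  have w: "r \<in> {1..n} \<Longrightarrow> word_of n L r = L!(r - 1)" for r by (simp add: word_of_def)
  have "inj_on (word_of n L) {1..n}"
  proof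
    fix r s assume rs: "r \<in> {1..n}" "s \<in> {1..n}" "word_of n L r = word_of n L s"
    then have "r - 1 = s - 1" using nth_eq_iff_index_eq[OF assms(1)] len w by auto
    then show "r = s" using rs by auto
  qed
  moreover have "word_of n L ` {1..n} = {1..n}"
  proof
    show "word_of n L ` {1..n} \<subseteq> {1..n}"
    proof
      fix y assume "y \<in> word_of n L ` {1..n}"
      then obtain r where "r \<in> {1..n}" "y = L!(r - 1)" using w by auto
      then have "y \<in> set L" using len by auto
      then show "y \<in> {1..n}" using assms(2) by simp
    qed
    show "{1..n} \<subseteq> word_of n L ` {1..n}"
    proof
      fix y assume "y \<in> {1..n}"
      then obtain p where "p < length L" "L!p = y" using assms(2) by (metis in_set_conv_nth)
      then have "Suc p \<in> {1..n}" "word_of n L (Suc p) = y" using len w by auto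
      then show "y \<in> word_of n L ` {1..n}" by blast
    qed
  qed
  ultimately show "bij_betw (word_of n L) {1..n} {1..n}" by (simp add: bij_betw_def)
  show "word_of n L x = x" if "x \<notin> {1..n}" for x using that by (auto simp: word_of_def)
qed

context shard_preorder
begin

lemma word_of_good_listing:
  assumes "good_listing {1..n} L"
  shows "run_word n R (word_of n L)"
proof -
  have L: "distinct L" "set L = {1..n}" "linear_ext L" "classes_decreasing L" "classes_contiguous L"
    "ascent_between_classes L" using assms by (auto simp: good_listing_def)
  have len: "length L = n" using L(1,2) distinct_card by fastforce
  let ?w = "word_of n L"
  have w: "r \<in> {1..n} \<Longrightarrow> ?w r = L!(r - 1)" for r by (simp add: word_of_def)
  show ?thesis
  proof (unfold_locales)
    show "?w permutes {1..n}" using L(1,2) by (rule word_of_permutes)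
  next
    fix r s assume h: "r \<in> {1..n}" "s \<in> {1..n}" "le (?w r) (?w s)" "\<not> le (?w s) (?w r)"
    show "r < s"
    proof (rule ccontr)
      assume "\<not> r < s"
      then have "s - 1 < r - 1" "r - 1 < length L" "?w r = L!(r - 1)" "?w s = L!(s - 1)"
        using h len w by (cases "r = s"; auto)+
      then show False using L(3) h(3,4) unfolding linear_ext_def sorted_wrt_iff_nth_less by auto
    qed
  next
    fix r s assume h: "1 \<le> r" "r < s" "s \<le> n" "eqv (?w r) (?w s)"
    then have "r - 1 < s - 1" "s - 1 < length L" "?w r = L!(r - 1)" "?w s = L!(s - 1)"
      using len w by auto
    then show "?w s < ?w r"
      using h(4) L(4) unfolding classes_decreasing_def sorted_wrt_iff_nth_less by auto
  next
    fix r t s assume h: "1 \<le> r" "r < t" "t < s" "s \<le> n" "eqv (?w r) (?w s)"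
    then have "r - 1 < t - 1" "t - 1 < s - 1" "s - 1 < length L"
      "?w r = L!(r - 1)" "?w t = L!(t - 1)" "?w s = L!(s - 1)"
      using len w by auto
    then show "eqv (?w t) (?w r)"
      using h(5) L(5)[unfolded classes_contiguous_def, rule_format, of "r - 1" "t - 1" "s - 1"] by simp
  next
    fix r assume h: "1 \<le> r" "r < n" "\<not> eqv (?w r) (?w (Suc r))"
    then have "Suc (r - 1) < length L" "?w r = L!(r - 1)" "?w (Suc r) = L!(Suc (r - 1))"
      using len w by auto
    then show "?w r < ?w (Suc r)"
      using h(3) successively_nth[OF L(6)[unfolded ascent_between_classes_def], of "r - 1"] by simp
  qed
qed

theorem exists_word: "\<exists>w. w permutes {1..n} \<and> coneC n w = coneR n R"
proof -
  have "\<forall>a\<in>{1..n}. \<forall>b. le a b \<longrightarrow> b \<in> {1..n}" using le_range by blast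
  then obtain L where "good_listing {1..n} L" using good_listing_exists by blast
  then interpret run_word n R "word_of n L" by (rule word_of_good_listing)
  show ?thesis using perm coneC_eq_coneR by blast
qed

end

section \<open>C(w) is an intersection of shards\<close>

text \<open>The shards whose intersection is C(w): for i < j in a common block, the shard
  of H_ij putting below x_i exactly the letters to the left of i in w.\<close>
definition word_shards :: "nat \<Rightarrow> (nat \<Rightarrow> nat) \<Rightarrow> (nat \<Rightarrow> real) set set" where
  "word_shards n w = {shard_cone n i j {k. inv w k < inv w i} | i j.
     i < j \<and> (\<exists>Bk\<in>blocks n w. i \<in> Bk \<and> j \<in> Bk)}"

lemma blocks_subset:
  assumes "w permutes {1..n}" "Bk \<in> blocks n w"
  shows "Bk \<subseteq> {1..n}"
proof -
  obtain a b where "Bk = w ` {a..b}" "1 \<le> a" "b \<le> n" using assms(2) unfolding blocks_def by blast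
  then have "Bk \<subseteq> w ` {1..n}" by auto
  then show ?thesis using permutes_image[OF assms(1)] by simp
qed

lemma word_shards_shards:
  assumes "w permutes {1..n}"
  shows "finite (word_shards n w)" "word_shards n w \<subseteq> shardsA n"
proof -
  have "word_shards n w \<subseteq> (\<lambda>(i,j). shard_cone n i j {k. inv w k < inv w i}) ` ({1..n} \<times> {1..n})"
    using blocks_subset[OF assms] unfolding word_shards_def by fastforce
  then show "finite (word_shards n w)" by (rule finite_subset) auto
  show "word_shards n w \<subseteq> shardsA n"
    using blocks_subset[OF assms] unfolding word_shards_def shardsA_eq by fastforce
qed

text \<open>C(w) is the intersection of the word shards: condition (i) of C(w) gives x_i = x_j
  for letters i < j of a block, and (ii) gives the inequalities for the k in between.\<close>
lemma coneC_eq_word_shards: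
  assumes w: "w permutes {1..n}"
  shows "coneC n w = VA n \<inter> \<Inter>(word_shards n w)"
proof
  have inv_inj: "inv w a = inv w b \<Longrightarrow> a = b" for a b by (metis permutes_inverses(1)[OF w])
  show "coneC n w \<subseteq> VA n \<inter> \<Inter>(word_shards n w)"
  proof
    fix x assume x: "x \<in> coneC n w"
    have E: "\<And>Bk i j. Bk \<in> blocks n w \<Longrightarrow> i \<in> Bk \<Longrightarrow> j \<in> Bk \<Longrightarrow> x i = x j"
      and I: "\<And>Bk i j k. Bk \<in> blocks n w \<Longrightarrow> i \<in> Bk \<Longrightarrow> j \<in> Bk \<Longrightarrow> i < k \<Longrightarrow> k < j \<Longrightarrow> k \<notin> Bk \<Longrightarrow>
          (inv w k < inv w i \<longrightarrow> x k \<le> x i) \<and> (inv w i < inv w k \<longrightarrow> x i \<le> x k)"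
      using x unfolding coneC_def by blast+
    have "x \<in> shard_cone n i j {k. inv w k < inv w i}"
      if blk: "Bk \<in> blocks n w" and ij: "i \<in> Bk" "j \<in> Bk" for Bk i j
    proof -
      have "(inv w k < inv w i \<longrightarrow> x k \<le> x i) \<and> (\<not> inv w k < inv w i \<longrightarrow> x i \<le> x k)"
        if k: "i < k" "k < j" for k
      proof (cases "k \<in> Bk")
        case True
        have "x k = x i" by (rule E[OF blk True ij(1)])
        then show ?thesis by simp
      next
        case False
        have "inv w k \<noteq> inv w i" using inv_inj k by auto
        then show ?thesis using I[OF blk ij k False] by auto
      qed
      moreover have "x i = x j" by (rule E[OF blk ij])
      moreover have "x \<in> VA n" using x by (simp add: coneC_def)
      ultimately show ?thesis by (simp add: shard_cone_def)
    qed
    then show "x \<in> VA n \<inter> \<Inter>(word_shards n w)"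
      using x by (auto simp: word_shards_def coneC_def)
  qed
  show "VA n \<inter> \<Inter>(word_shards n w) \<subseteq> coneC n w"
  proof
    fix x assume x: "x \<in> VA n \<inter> \<Inter>(word_shards n w)"
    have in_shard: "x \<in> shard_cone n i j {k. inv w k < inv w i}"
      if "i < j" "Bk \<in> blocks n w" "i \<in> Bk" "j \<in> Bk" for i j Bk
      using x that unfolding word_shards_def by blast
    have "x i = x j" if "Bk \<in> blocks n w" "i \<in> Bk" "j \<in> Bk" for Bk i j
      using in_shard[of i j Bk] in_shard[of j i Bk] that
      by (cases i j rule: linorder_cases) (auto simp: shard_cone_def)
    moreover have "(inv w k < inv w i \<longrightarrow> x k \<le> x i) \<and> (inv w i < inv w k \<longrightarrow> x i \<le> x k)"
      if "Bk \<in> blocks n w" "i \<in> Bk" "j \<in> Bk" "i < k" "k < j" for Bk i j k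
      using in_shard[of i j Bk] that by (auto simp: shard_cone_def)
    ultimately show "x \<in> coneC n w" using x unfolding coneC_def by blast
  qed
qed

theorem mainTheorem4:
  fixes n :: nat
  shows "(\<forall>X \<in> shard_intersections n. \<exists>w. w permutes {1..n} \<and> X = coneC n w) \<and>
         (\<forall>w. w permutes {1..n} \<longrightarrow> coneC n w \<in> shard_intersections n)"
proof (intro conjI ballI allI impI)
  fix X assume "X \<in> shard_intersections n"
  then obtain R where R: "shard_union n R" "X = coneR n R"
    using shard_intersection_is_coneR by blast
  interpret shard_preorder n R by (rule shard_preorder.intro[OF R(1)])
  show "\<exists>w. w permutes {1..n} \<and> X = coneC n w" using exists_word R(2) by metis
next
  fix w :: "nat \<Rightarrow> nat" assume w: "w permutes {1..n}"
  then show "coneC n w \<in> shard_intersections n"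
    unfolding shard_intersections_def coneC_eq_word_shards[OF w] using word_shards_shards[OF w] by blast
qed

end
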